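(* Let $f \in \mathcal{C}_{2\pi}$, let $A_n[f]$ be the Toeplitz matrix generated by $f$ and $c_n[f]$ the optimal circulant preconditioner for $A_n[f]$. For every $\epsilon>0$ there exist positive integers $N$ and $M$ such that for every $n>N$ there are matrices $R_n[f],E_n[f]\in\mathbb{C}^{n\times n}$ with \[ e^{c_n[f]}-e^{A_n[f]} = R_n[f]+E_n[f],\qquad \operatorname{rank} R_n[f]\le 2M,\qquad \|E_n[f]\|_2\le\epsilon. \]
   Context: $\mathcal{C}_{2\pi}$ denotes the Banach space of all $2\pi$-periodic continuous complex-valued functions on $\mathbb{R}$ with the supremum norm $\|\cdot\|_\infty$. For $f\in\mathcal{C}_{2\pi}$ its Fourier coefficients are $a_k=\frac{1}{2\pi}\int_{-\pi}^{\pi} f(\theta)e^{-\mathbf{i}k\theta}\,d\theta$, $k\in\mathbb{Z}$. The Toeplitz matrix generated by $f$ is the $n\times n$ matrix $A_n[f]$ whose $(j,k)$ entry is $a_{j-k}$. The optimal circulant preconditioner $c_n[f]$ is the $n\times n$ circulant matrix whose $(j,k)$ entry is $c_{(j-k)\bmod n}$, where $c_k=\frac{(n-k)a_k+k\,a_{k-n}}{n}$ for $0\le k<n$. For a square matrix $X$, $e^{X}=\sum_{m\ge 0}X^m/m!$. $\|\cdot\|_2$ is the spectral norm. *)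

theory Defs
  imports "HOL-Analysis.Analysis" "Jordan_Normal_Form.Matrix" "Jordan_Normal_Form.DL_Rank"
begin

definition fourier_coeff :: "(real \<Rightarrow> complex) \<Rightarrow> int \<Rightarrow> complex" where
  "fourier_coeff f k = (1 / (2 * of_real pi)) *
     integral {-pi..pi} (\<lambda>t. f t * exp (- \<i> * of_int k * of_real t))"

definition toeplitz_mat :: "nat \<Rightarrow> (real \<Rightarrow> complex) \<Rightarrow> complex mat" where
  "toeplitz_mat n f = mat n n (\<lambda>(j,k). fourier_coeff f (int j - int k))"

definition opt_circ_coeff :: "nat \<Rightarrow> (real \<Rightarrow> complex) \<Rightarrow> nat \<Rightarrow> complex" where
  "opt_circ_coeff n f k =
     ((of_nat n - of_nat k) * fourier_coeff f (int k)
       + of_nat k * fourier_coeff f (int k - int n)) / of_nat n"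

definition opt_circulant :: "nat \<Rightarrow> (real \<Rightarrow> complex) \<Rightarrow> complex mat" where
  "opt_circulant n f = mat n n (\<lambda>(j,k). opt_circ_coeff n f (nat ((int j - int k) mod int n)))"

definition mat_exp :: "complex mat \<Rightarrow> complex mat" where
  "mat_exp X = mat (dim_row X) (dim_col X)
     (\<lambda>(i,j). (\<Sum>m. (X ^\<^sub>m m) $$ (i,j) / of_nat (fact m)))"

definition vec_norm2 :: "complex vec \<Rightarrow> real" where
  "vec_norm2 v = sqrt (\<Sum>i<dim_vec v. (cmod (v $ i))\<^sup>2)"

definition spec_norm :: "complex mat \<Rightarrow> real" where
  "spec_norm X = Sup {vec_norm2 (X *\<^sub>v v) | v. v \<in> carrier_vec (dim_col X) \<and> vec_norm2 v \<le> 1}"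

end

theory Submission
  imports Defs
begin

text \<open>Approximate f uniformly within \<open>\<delta>\<close> by a trigonometric polynomial p of degree M0. The Toeplitz
matrix and the optimal circulant both have spectral norm at most the sup norm of their symbol, so
A_n[f] is \<open>\<delta>\<close>-close to the banded Toeplitz matrix T = A_n[p], and c_n[f] is \<open>\<delta>\<close>-close to c_n[p],
which for large n is \<open>\<delta>\<close>-close to the circulant D obtained by wrapping the band of T around.
D and T agree outside the first and last M0 rows, so D^m and T^m agree outside the first and last
m M0 rows, and the truncated series \<open>\<Sum>m<K. (D^m - T^m)/m!\<close> has rank at most 2 K M0. The
remainder is small because the exponential series is Lipschitz with constant e^r on matrices of
norm at most r, and its tails beyond K are uniformly small.\<close>

section \<open>Operator norm bounds for matrices given by their entries\<close>

text \<open>An n \<open>\<times>\<close> n matrix is represented by a function \<open>nat \<Rightarrow> nat \<Rightarrow> complex\<close> of which only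
the entries with both indices below n matter.\<close>

definition l2_norm :: "nat \<Rightarrow> (nat \<Rightarrow> complex) \<Rightarrow> real" where
  "l2_norm n v = sqrt (\<Sum>i<n. (cmod (v i))\<^sup>2)"

definition mat_apply :: "nat \<Rightarrow> (nat \<Rightarrow> nat \<Rightarrow> complex) \<Rightarrow> (nat \<Rightarrow> complex) \<Rightarrow> nat \<Rightarrow> complex" where
  "mat_apply n X v = (\<lambda>i. \<Sum>j<n. X i j * v j)"

definition op_norm_le :: "nat \<Rightarrow> (nat \<Rightarrow> nat \<Rightarrow> complex) \<Rightarrow> real \<Rightarrow> bool" where
  "op_norm_le n X b \<longleftrightarrow> (\<forall>v. l2_norm n (mat_apply n X v) \<le> b * l2_norm n v)"

definition mat_prod :: "nat \<Rightarrow> (nat \<Rightarrow> nat \<Rightarrow> complex) \<Rightarrow> (nat \<Rightarrow> nat \<Rightarrow> complex) \<Rightarrow> nat \<Rightarrow> nat \<Rightarrow> complex" where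
  "mat_prod n X Y = (\<lambda>i j. \<Sum>k<n. X i k * Y k j)"

lemma l2_norm_eq_L2_set: "l2_norm n v = L2_set (\<lambda>i. cmod (v i)) {..<n}"
  by (simp add: l2_norm_def L2_set_def)

lemma l2_norm_nonneg: "0 \<le> l2_norm n v"
  by (simp add: l2_norm_def sum_nonneg)

lemma l2_norm_triangle: "l2_norm n (\<lambda>i. u i + v i) \<le> l2_norm n u + l2_norm n v"
proof -
  have "l2_norm n (\<lambda>i. u i + v i) \<le> L2_set (\<lambda>i. cmod (u i) + cmod (v i)) {..<n}"
    unfolding l2_norm_eq_L2_set by (rule L2_set_mono) (auto simp: norm_triangle_ineq)
  also have "\<dots> \<le> l2_norm n u + l2_norm n v" unfolding l2_norm_eq_L2_set by (rule L2_set_triangle_ineq)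
  finally show ?thesis .
qed

lemma l2_norm_scale: "l2_norm n (\<lambda>i. c * v i) = cmod c * l2_norm n v"
proof -
  have "(\<Sum>i<n. (cmod (c * v i))\<^sup>2) = (cmod c)\<^sup>2 * (\<Sum>i<n. (cmod (v i))\<^sup>2)"
    by (simp add: norm_mult power_mult_distrib sum_distrib_left)
  thus ?thesis by (simp add: l2_norm_def real_sqrt_mult)
qed

lemma l2_norm_cong: "(\<And>i. i < n \<Longrightarrow> u i = v i) \<Longrightarrow> l2_norm n u = l2_norm n v"
  by (simp add: l2_norm_def)

lemma l2_norm_zero: "l2_norm n (\<lambda>i. 0) = 0" by (simp add: l2_norm_def)

lemma l2_norm_sum_le: "finite S \<Longrightarrow> l2_norm n (\<lambda>i. \<Sum>s\<in>S. u s i) \<le> (\<Sum>s\<in>S. l2_norm n (u s))"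
proof (induction S rule: finite_induct)
  case empty thus ?case by (simp add: l2_norm_zero)
next
  case (insert x F)
  have "l2_norm n (\<lambda>i. \<Sum>s\<in>insert x F. u s i) = l2_norm n (\<lambda>i. u x i + (\<Sum>s\<in>F. u s i))"
    using insert by simp
  also have "\<dots> \<le> l2_norm n (u x) + l2_norm n (\<lambda>i. \<Sum>s\<in>F. u s i)" by (rule l2_norm_triangle)
  also have "\<dots> \<le> l2_norm n (u x) + (\<Sum>s\<in>F. l2_norm n (u s))" using insert by simp
  finally show ?case using insert by simp
qed

lemma norm_entry_le_l2_norm: "i < n \<Longrightarrow> cmod (v i) \<le> l2_norm n v"
proof -
  assume i: "i < n"
  have "(cmod (v i))\<^sup>2 \<le> (\<Sum>i<n. (cmod (v i))\<^sup>2)"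
    using i by (intro member_le_sum) auto
  thus ?thesis unfolding l2_norm_def by (metis norm_ge_zero real_le_rsqrt)
qed

lemma mat_apply_cong:
  "(\<And>i j. i < n \<Longrightarrow> j < n \<Longrightarrow> X i j = Y i j) \<Longrightarrow> i < n \<Longrightarrow> mat_apply n X v i = mat_apply n Y v i"
  by (simp add: mat_apply_def)

lemma op_norm_le_cong:
  "(\<And>i j. i < n \<Longrightarrow> j < n \<Longrightarrow> X i j = Y i j) \<Longrightarrow> op_norm_le n X b \<Longrightarrow> op_norm_le n Y b"
proof -
  assume h: "\<And>i j. i < n \<Longrightarrow> j < n \<Longrightarrow> X i j = Y i j" and "op_norm_le n X b"
  have "l2_norm n (mat_apply n Y v) = l2_norm n (mat_apply n X v)" for v
    by (rule l2_norm_cong) (simp add: mat_apply_cong[OF h])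
  thus ?thesis using \<open>op_norm_le n X b\<close> by (simp add: op_norm_le_def)
qed

lemma op_norm_le_mono: "op_norm_le n X a \<Longrightarrow> a \<le> b \<Longrightarrow> op_norm_le n X b"
  unfolding op_norm_le_def by (meson l2_norm_nonneg mult_right_mono order_trans)

lemma mat_apply_add: "mat_apply n (\<lambda>i j. X i j + Y i j) v = (\<lambda>i. mat_apply n X v i + mat_apply n Y v i)"
  by (simp add: mat_apply_def distrib_right sum.distrib)

lemma mat_apply_scale: "mat_apply n (\<lambda>i j. c * X i j) v = (\<lambda>i. c * mat_apply n X v i)"
  by (simp add: mat_apply_def sum_distrib_left mult.assoc)

lemma mat_apply_sum: "mat_apply n (\<lambda>i j. \<Sum>s\<in>S. F s i j) v = (\<lambda>i. \<Sum>s\<in>S. mat_apply n (F s) v i)"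
proof
  fix i
  have "(\<Sum>j<n. (\<Sum>s\<in>S. F s i j) * v j) = (\<Sum>j<n. \<Sum>s\<in>S. F s i j * v j)"
    by (simp add: sum_distrib_right)
  also have "\<dots> = (\<Sum>s\<in>S. \<Sum>j<n. F s i j * v j)" by (rule sum.swap)
  finally show "mat_apply n (\<lambda>i j. \<Sum>s\<in>S. F s i j) v i = (\<Sum>s\<in>S. mat_apply n (F s) v i)" by (simp add: mat_apply_def)
qed

lemma mat_apply_mat_prod: "mat_apply n (mat_prod n X Y) v = mat_apply n X (mat_apply n Y v)"
proof
  fix i
  have "(\<Sum>j<n. (\<Sum>k<n. X i k * Y k j) * v j) = (\<Sum>j<n. \<Sum>k<n. X i k * (Y k j * v j))"
    by (simp add: sum_distrib_right mult.assoc)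
  also have "\<dots> = (\<Sum>k<n. \<Sum>j<n. X i k * (Y k j * v j))" by (rule sum.swap)
  also have "\<dots> = (\<Sum>k<n. X i k * (\<Sum>j<n. Y k j * v j))" by (simp add: sum_distrib_left)
  finally show "mat_apply n (mat_prod n X Y) v i = mat_apply n X (mat_apply n Y v) i" by (simp add: mat_apply_def mat_prod_def)
qed

lemma op_norm_le_add: "op_norm_le n X a \<Longrightarrow> op_norm_le n Y b \<Longrightarrow> op_norm_le n (\<lambda>i j. X i j + Y i j) (a + b)"
  unfolding op_norm_le_def mat_apply_add
proof (intro allI)
  fix v assume h: "\<forall>v. l2_norm n (mat_apply n X v) \<le> a * l2_norm n v" "\<forall>v. l2_norm n (mat_apply n Y v) \<le> b * l2_norm n v"
  have "l2_norm n (\<lambda>i. mat_apply n X v i + mat_apply n Y v i) \<le> l2_norm n (mat_apply n X v) + l2_norm n (mat_apply n Y v)"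
    using l2_norm_triangle[of n "mat_apply n X v" "mat_apply n Y v"] by simp
  also have "\<dots> \<le> a * l2_norm n v + b * l2_norm n v" using h by (intro add_mono) auto
  finally show "l2_norm n (\<lambda>i. mat_apply n X v i + mat_apply n Y v i) \<le> (a + b) * l2_norm n v" by (simp add: distrib_right)
qed

lemma op_norm_le_scale: "op_norm_le n X a \<Longrightarrow> op_norm_le n (\<lambda>i j. c * X i j) (cmod c * a)"
  unfolding op_norm_le_def mat_apply_scale l2_norm_scale by (simp add: mult.assoc mult_left_mono)

lemma op_norm_le_diff: "op_norm_le n X a \<Longrightarrow> op_norm_le n Y b \<Longrightarrow> op_norm_le n (\<lambda>i j. X i j - Y i j) (a + b)"
  using op_norm_le_add[of n X a "\<lambda>i j. (-1) * Y i j" b] op_norm_le_scale[of n Y b "-1"] by simp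

lemma op_norm_le_sum:
  "finite S \<Longrightarrow> (\<And>s. s \<in> S \<Longrightarrow> op_norm_le n (F s) (b s)) \<Longrightarrow>
    op_norm_le n (\<lambda>i j. \<Sum>s\<in>S. F s i j) (\<Sum>s\<in>S. b s)"
  unfolding op_norm_le_def mat_apply_sum
proof (intro allI)
  fix v assume fin: "finite S" and h: "\<And>s. s \<in> S \<Longrightarrow> \<forall>v. l2_norm n (mat_apply n (F s) v) \<le> b s * l2_norm n v"
  have "l2_norm n (\<lambda>i. \<Sum>s\<in>S. mat_apply n (F s) v i) \<le> (\<Sum>s\<in>S. l2_norm n (mat_apply n (F s) v))"
    by (rule l2_norm_sum_le[OF fin])
  also have "\<dots> \<le> (\<Sum>s\<in>S. b s * l2_norm n v)" by (rule sum_mono) (use h in auto)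
  finally show "l2_norm n (\<lambda>i. \<Sum>s\<in>S. mat_apply n (F s) v i) \<le> sum b S * l2_norm n v" by (simp add: sum_distrib_right)
qed

lemma op_norm_le_mat_prod:
  "op_norm_le n X a \<Longrightarrow> op_norm_le n Y b \<Longrightarrow> 0 \<le> a \<Longrightarrow> op_norm_le n (mat_prod n X Y) (a * b)"
  unfolding op_norm_le_def mat_apply_mat_prod by (metis mult.assoc mult_left_mono order_trans)

lemma op_norm_le_zero: "op_norm_le n (\<lambda>i j. 0) 0" by (simp add: op_norm_le_def mat_apply_def l2_norm_zero)

lemma op_norm_le_id: "op_norm_le n (\<lambda>i j. if i = j then 1 else 0) 1"
proof -
  have "mat_apply n (\<lambda>i j. if i = j then 1 else 0) v i = v i" if "i < n" for v i
  proof -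
    have "(\<Sum>j<n. (if i = j then 1 else 0) * v j) = (\<Sum>j<n. if i = j then v i else 0)" by (rule sum.cong) auto
    thus ?thesis using that by (simp add: mat_apply_def)
  qed
  hence "l2_norm n (mat_apply n (\<lambda>i j. if i = j then 1 else 0) v) = l2_norm n v" for v by (intro l2_norm_cong) simp
  thus ?thesis unfolding op_norm_le_def by simp
qed

lemma op_norm_le_entry: "op_norm_le n X b \<Longrightarrow> i < n \<Longrightarrow> j < n \<Longrightarrow> cmod (X i j) \<le> b"
proof -
  assume h: "op_norm_le n X b" "i < n" "j < n"
  let ?e = "\<lambda>k. if k = j then 1 else (0::complex)"
  have "(\<Sum>k<n. X i k * ?e k) = (\<Sum>k<n. if k = j then X i j else 0)" by (rule sum.cong) auto
  hence "mat_apply n X ?e i = X i j" using h by (simp add: mat_apply_def)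
  moreover have "(\<Sum>k<n. (cmod (?e k))\<^sup>2) = (\<Sum>k<n. if k = j then 1 else 0)" by (rule sum.cong) auto
  hence "l2_norm n ?e = 1" using h by (simp add: l2_norm_def)
  moreover have "l2_norm n (mat_apply n X ?e) \<le> b * l2_norm n ?e" using h(1) unfolding op_norm_le_def by blast
  moreover have "cmod (mat_apply n X ?e i) \<le> l2_norm n (mat_apply n X ?e)" using h(2) by (rule norm_entry_le_l2_norm)
  ultimately show ?thesis by simp
qed

lemma op_norm_le_frobenius: "op_norm_le n X (sqrt (\<Sum>i<n. \<Sum>j<n. (cmod (X i j))\<^sup>2))"
  unfolding op_norm_le_def
proof
  fix v
  have "(cmod (mat_apply n X v i))\<^sup>2 \<le> (\<Sum>j<n. (cmod (X i j))\<^sup>2) * (\<Sum>j<n. (cmod (v j))\<^sup>2)" for i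
  proof -
    have "cmod (mat_apply n X v i) \<le> (\<Sum>j<n. \<bar>cmod (X i j)\<bar> * \<bar>cmod (v j)\<bar>)"
      unfolding mat_apply_def by (rule order_trans[OF norm_sum]) (simp add: norm_mult)
    also have "\<dots> \<le> L2_set (\<lambda>j. cmod (X i j)) {..<n} * L2_set (\<lambda>j. cmod (v j)) {..<n}"
      by (rule L2_set_mult_ineq)
    finally have "(cmod (mat_apply n X v i))\<^sup>2 \<le> (L2_set (\<lambda>j. cmod (X i j)) {..<n} * L2_set (\<lambda>j. cmod (v j)) {..<n})\<^sup>2"
      by (simp add: power_mono)
    thus ?thesis by (simp add: power_mult_distrib L2_set_def sum_nonneg)
  qed
  hence "(\<Sum>i<n. (cmod (mat_apply n X v i))\<^sup>2) \<le> (\<Sum>i<n. (\<Sum>j<n. (cmod (X i j))\<^sup>2) * (\<Sum>j<n. (cmod (v j))\<^sup>2))"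
    by (rule sum_mono)
  also have "\<dots> = (\<Sum>i<n. \<Sum>j<n. (cmod (X i j))\<^sup>2) * (\<Sum>j<n. (cmod (v j))\<^sup>2)"
    by (simp add: sum_distrib_right)
  finally have "sqrt (\<Sum>i<n. (cmod (mat_apply n X v i))\<^sup>2) \<le> sqrt ((\<Sum>i<n. \<Sum>j<n. (cmod (X i j))\<^sup>2) * (\<Sum>j<n. (cmod (v j))\<^sup>2))"
    by (rule real_sqrt_le_mono)
  thus "l2_norm n (mat_apply n X v) \<le> sqrt (\<Sum>i<n. \<Sum>j<n. (cmod (X i j))\<^sup>2) * l2_norm n v"
    unfolding l2_norm_def real_sqrt_mult .
qed

lemma op_norm_le_limit:
  assumes lim: "\<And>i j. i < n \<Longrightarrow> j < n \<Longrightarrow> (\<lambda>L. Z L i j) \<longlonglongrightarrow> W i j"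
    and ev: "\<And>L. L \<ge> L0 \<Longrightarrow> op_norm_le n (Z L) b"
  shows "op_norm_le n W b"
  unfolding op_norm_le_def
proof
  fix v
  have "(\<lambda>L. mat_apply n (Z L) v i) \<longlonglongrightarrow> mat_apply n W v i" if "i < n" for i
    unfolding mat_apply_def using that lim by (intro tendsto_sum tendsto_mult tendsto_const) auto
  hence "(\<lambda>L. l2_norm n (mat_apply n (Z L) v)) \<longlonglongrightarrow> l2_norm n (mat_apply n W v)"
    unfolding l2_norm_def by (intro tendsto_real_sqrt tendsto_sum tendsto_power tendsto_norm) auto
  moreover have "\<forall>\<^sub>F L in sequentially. l2_norm n (mat_apply n (Z L) v) \<le> b * l2_norm n v"
    using ev unfolding op_norm_le_def eventually_sequentially by blast
  ultimately show "l2_norm n (mat_apply n W v) \<le> b * l2_norm n v" by (rule tendsto_upperbound) simp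
qed

section \<open>Powers and the exponential series\<close>

primrec mat_power :: "nat \<Rightarrow> (nat \<Rightarrow> nat \<Rightarrow> complex) \<Rightarrow> nat \<Rightarrow> nat \<Rightarrow> nat \<Rightarrow> complex" where
  "mat_power n X 0 = (\<lambda>i j. if i = j then 1 else 0)"
| "mat_power n X (Suc m) = mat_prod n (mat_power n X m) X"

definition exp_partial_sum :: "nat \<Rightarrow> (nat \<Rightarrow> nat \<Rightarrow> complex) \<Rightarrow> nat \<Rightarrow> nat \<Rightarrow> nat \<Rightarrow> complex" where
  "exp_partial_sum n X L = (\<lambda>i j. \<Sum>m<L. mat_power n X m i j / of_nat (fact m))"

lemma exp_series_sums: "(\<lambda>m. r ^ m / fact m) sums exp (r::real)"
  using exp_converges[of r] by (simp add: divide_inverse mult.commute)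

lemma exp_partial_sum_le_exp: "0 \<le> (r::real) \<Longrightarrow> (\<Sum>m<L. r ^ m / fact m) \<le> exp r"
  using exp_series_sums[of r] sum_le_suminf[of "\<lambda>m. r ^ m / fact m" "{..<L}"]
  by (simp add: sums_iff)

lemma op_norm_le_mat_power: "op_norm_le n X r \<Longrightarrow> 0 \<le> r \<Longrightarrow> op_norm_le n (mat_power n X m) (r ^ m)"
proof (induction m)
  case 0 thus ?case using op_norm_le_id by simp
next
  case (Suc m)
  hence "op_norm_le n (mat_prod n (mat_power n X m) X) (r ^ m * r)" by (intro op_norm_le_mat_prod) auto
  thus ?case by (simp add: mult.commute)
qed

lemma mat_prod_diff_left: "mat_prod n (\<lambda>i j. A i j - B i j) C = (\<lambda>i j. mat_prod n A C i j - mat_prod n B C i j)"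
  by (simp add: mat_prod_def left_diff_distrib sum_subtractf)

lemma mat_prod_diff_right: "mat_prod n C (\<lambda>i j. A i j - B i j) = (\<lambda>i j. mat_prod n C A i j - mat_prod n C B i j)"
  by (simp add: mat_prod_def right_diff_distrib sum_subtractf)

lemma op_norm_le_mat_power_diff:
  assumes X: "op_norm_le n X r" and Y: "op_norm_le n Y r" and r: "0 \<le> r"
    and D: "op_norm_le n (\<lambda>i j. X i j - Y i j) a" and a: "0 \<le> a"
  shows "op_norm_le n (\<lambda>i j. mat_power n X m i j - mat_power n Y m i j) (real m * r ^ (m - 1) * a)"
proof (induction m)
  case 0 thus ?case using op_norm_le_zero by simp
next
  case (Suc m)
  have eq: "(\<lambda>i j. mat_power n X (Suc m) i j - mat_power n Y (Suc m) i j) =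
     (\<lambda>i j. mat_prod n (\<lambda>i j. mat_power n X m i j - mat_power n Y m i j) X i j
            + mat_prod n (mat_power n Y m) (\<lambda>i j. X i j - Y i j) i j)"
    by (simp add: mat_prod_diff_left mat_prod_diff_right)
  have "op_norm_le n (mat_prod n (\<lambda>i j. mat_power n X m i j - mat_power n Y m i j) X) (real m * r ^ (m - 1) * a * r)"
    using Suc X r a by (intro op_norm_le_mat_prod) auto
  moreover have "op_norm_le n (mat_prod n (mat_power n Y m) (\<lambda>i j. X i j - Y i j)) (r ^ m * a)"
    using op_norm_le_mat_power[OF Y r] D r by (intro op_norm_le_mat_prod) auto
  ultimately have "op_norm_le n (\<lambda>i j. mat_power n X (Suc m) i j - mat_power n Y (Suc m) i j) (real m * r ^ (m - 1) * a * r + r ^ m * a)"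
    unfolding eq by (rule op_norm_le_add)
  moreover have "real m * r ^ (m - 1) * a * r + r ^ m * a = real (Suc m) * r ^ (Suc m - 1) * a"
  proof (cases m)
    case 0 thus ?thesis by simp
  next
    case (Suc k) thus ?thesis by (simp add: algebra_simps)
  qed
  ultimately show ?case by simp
qed

lemma sum_exp_derivative_terms: "(\<Sum>m<Suc L. real m * r ^ (m - 1) / fact m) = (\<Sum>m<L. r ^ m / fact m)"
proof (induction L)
  case 0 thus ?case by simp
next
  case (Suc L)
  have f: "(fact (Suc L)::real) = real (Suc L) * fact L" by (simp only: fact_Suc of_nat_mult)
  have "real (Suc L) * r ^ L / fact (Suc L) = (real (Suc L) * r ^ L) / (real (Suc L) * fact L)"
    by (simp only: f)
  also have "\<dots> = r ^ L / fact L" by (rule mult_divide_mult_cancel_left) simp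
  finally have "real (Suc L) * r ^ L / fact (Suc L) = r ^ L / fact L" .
  thus ?case using Suc by simp
qed

lemma sum_exp_derivative_terms_le: "0 \<le> (r::real) \<Longrightarrow> (\<Sum>m<L. real m * r ^ (m - 1) / fact m) \<le> exp r"
proof -
  assume r: "0 \<le> r"
  have "(\<Sum>m<L. real m * r ^ (m - 1) / fact m) \<le> (\<Sum>m<Suc L. real m * r ^ (m - 1) / fact m)"
    by (simp add: r)
  also have "\<dots> = (\<Sum>m<L. r ^ m / fact m)" by (rule sum_exp_derivative_terms)
  also have "\<dots> \<le> exp r" using r by (rule exp_partial_sum_le_exp)
  finally show ?thesis .
qed

lemma norm_inverse_fact: "cmod (complex_of_real (1 / fact m)) = 1 / fact m"
  by (subst norm_of_real) simp

lemma op_norm_le_exp_partial_sum_diff: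
  assumes X: "op_norm_le n X r" and Y: "op_norm_le n Y r" and r: "0 \<le> r"
    and D: "op_norm_le n (\<lambda>i j. X i j - Y i j) a" and a: "0 \<le> a"
  shows "op_norm_le n (\<lambda>i j. exp_partial_sum n X L i j - exp_partial_sum n Y L i j) (exp r * a)"
proof -
  have eq: "(\<lambda>i j. exp_partial_sum n X L i j - exp_partial_sum n Y L i j) =
      (\<lambda>i j. \<Sum>m<L. complex_of_real (1 / fact m) * (mat_power n X m i j - mat_power n Y m i j))"
    by (simp add: exp_partial_sum_def sum_subtractf diff_divide_distrib)
  have N: "op_norm_le n (\<lambda>i j. \<Sum>m<L. complex_of_real (1 / fact m) * (mat_power n X m i j - mat_power n Y m i j))
         (\<Sum>m<L. cmod (complex_of_real (1 / fact m)) * (real m * r ^ (m - 1) * a))"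
    by (intro op_norm_le_sum op_norm_le_scale op_norm_le_mat_power_diff[OF X Y r D a]) auto
  have E: "(\<Sum>m<L. cmod (complex_of_real (1 / fact m)) * (real m * r ^ (m - 1) * a)) =
      (\<Sum>m<L. real m * r ^ (m - 1) / fact m) * a"
    unfolding norm_inverse_fact by (simp add: sum_distrib_right)
  have B: "(\<Sum>m<L. real m * r ^ (m - 1) / fact m) * a \<le> exp r * a"
    using sum_exp_derivative_terms_le[OF r] a by (rule mult_right_mono)
  show ?thesis unfolding eq by (rule op_norm_le_mono[OF N]) (simp only: E B)
qed

lemma op_norm_le_exp_partial_sum_tail:
  assumes X: "op_norm_le n X r" and Y: "op_norm_le n Y r" and r: "0 \<le> r" and KL: "K \<le> L"
  shows "op_norm_le n (\<lambda>i j. (exp_partial_sum n X L i j - exp_partial_sum n Y L i j)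
                               - (exp_partial_sum n X K i j - exp_partial_sum n Y K i j))
           (2 * (exp r - (\<Sum>m<K. r ^ m / fact m)))"
proof -
  have split: "{..<L} = {..<K} \<union> {K..<L}" using KL by auto
  have U: "sum g ({..<K} \<union> {K..<L}) = sum g {..<K} + sum g {K..<L}" for g :: "nat \<Rightarrow> 'b::comm_monoid_add"
    by (rule sum.union_disjoint) auto
  have eq: "(\<lambda>i j. (exp_partial_sum n X L i j - exp_partial_sum n Y L i j) - (exp_partial_sum n X K i j - exp_partial_sum n Y K i j)) =
      (\<lambda>i j. \<Sum>m\<in>{K..<L}. complex_of_real (1 / fact m) * (mat_power n X m i j - mat_power n Y m i j))"
    unfolding exp_partial_sum_def split U by (simp add: sum_subtractf diff_divide_distrib)
  have N: "op_norm_le n (\<lambda>i j. \<Sum>m\<in>{K..<L}. complex_of_real (1 / fact m) * (mat_power n X m i j - mat_power n Y m i j))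
         (\<Sum>m\<in>{K..<L}. cmod (complex_of_real (1 / fact m)) * (r ^ m + r ^ m))"
    by (intro op_norm_le_sum op_norm_le_scale op_norm_le_diff op_norm_le_mat_power X Y r) auto
  have E: "(\<Sum>m\<in>{K..<L}. cmod (complex_of_real (1 / fact m)) * (r ^ m + r ^ m)) =
      2 * ((\<Sum>m<L. r ^ m / fact m) - (\<Sum>m<K. r ^ m / fact m))"
    unfolding split U norm_inverse_fact by (simp add: sum_distrib_left)
  have B: "(\<Sum>m<L. r ^ m / fact m) \<le> exp r" using r by (rule exp_partial_sum_le_exp)
  have B2: "2 * ((\<Sum>m<L. r ^ m / fact m) - (\<Sum>m<K. r ^ m / fact m)) \<le> 2 * (exp r - (\<Sum>m<K. r ^ m / fact m))"
    using B by simp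
  show ?thesis unfolding eq by (rule op_norm_le_mono[OF N]) (subst E, rule B2)
qed

lemma summable_mat_power_entry:
  assumes X: "op_norm_le n X r" and r: "0 \<le> r" and ij: "i < n" "j < n"
  shows "summable (\<lambda>m. mat_power n X m i j / of_nat (fact m))"
proof (rule summable_comparison_test[where g = "\<lambda>m. r ^ m / fact m"])
  show "summable (\<lambda>m. r ^ m / fact m)" using exp_series_sums[of r] by (simp add: sums_iff)
  show "\<exists>N. \<forall>m\<ge>N. norm (mat_power n X m i j / of_nat (fact m)) \<le> r ^ m / fact m"
  proof (intro exI allI impI)
    fix m
    have "cmod (mat_power n X m i j) \<le> r ^ m" using op_norm_le_entry[OF op_norm_le_mat_power[OF X r] ij] .
    thus "norm (mat_power n X m i j / of_nat (fact m)) \<le> r ^ m / fact m"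
      by (simp add: norm_divide divide_right_mono)
  qed
qed

lemma exp_partial_sum_tendsto:
  assumes X: "op_norm_le n X r" and r: "0 \<le> r" and ij: "i < n" "j < n"
  shows "(\<lambda>L. exp_partial_sum n X L i j) \<longlonglongrightarrow> (\<Sum>m. mat_power n X m i j / of_nat (fact m))"
  unfolding exp_partial_sum_def using summable_LIMSEQ[OF summable_mat_power_entry[OF assms]] .

lemma exp_partial_sum_eventually_close:
  fixes r e :: real
  assumes "0 < e"
  obtains K where "exp r - (\<Sum>m<K. r ^ m / fact m) < e"
proof -
  have "(\<lambda>K. \<Sum>m<K. r ^ m / fact m) \<longlonglongrightarrow> exp r"
    using exp_series_sums[of r] by (simp add: sums_def)
  hence "\<forall>\<^sub>F K in sequentially. exp r - e < (\<Sum>m<K. r ^ m / fact m)"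
    using assms by (intro order_tendstoD(1)) auto
  then obtain K where "exp r - e < (\<Sum>m<K. r ^ m / fact m)"
    unfolding eventually_sequentially by blast
  then show thesis by (intro that[of K]) linarith
qed

lemma exp_error_budget:
  fixes r \<epsilon> :: real
  assumes \<epsilon>: "0 < \<epsilon>"
  obtains K \<delta> where "0 < \<delta>" "\<delta> \<le> 1" "3 * exp r * \<delta> + 2 * (exp r - (\<Sum>m<K. r ^ m / fact m)) \<le> \<epsilon>"
proof -
  obtain K where K: "exp r - (\<Sum>m<K. r ^ m / fact m) < \<epsilon> / 4"
    using exp_partial_sum_eventually_close[where e = "\<epsilon> / 4" and r = r] \<epsilon> by auto
  define \<delta> where "\<delta> = min 1 (\<epsilon> / (6 * exp r))"
  have "exp r * \<delta> \<le> exp r * (\<epsilon> / (6 * exp r))"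
    by (intro mult_left_mono) (simp_all add: \<delta>_def)
  hence "3 * exp r * \<delta> \<le> \<epsilon> / 2" by simp
  moreover have "0 < \<delta>" "\<delta> \<le> 1" using \<epsilon> by (simp_all add: \<delta>_def)
  ultimately show thesis using K by (intro that[of \<delta> K]) auto
qed

lemma op_norm_le_exp_partial_sum_split:
  assumes X: "op_norm_le n X r" and Y: "op_norm_le n Y r" and X': "op_norm_le n X' r" and Y': "op_norm_le n Y' r" and r: "0 \<le> r"
    and DX: "op_norm_le n (\<lambda>i j. X i j - X' i j) a" and DY: "op_norm_le n (\<lambda>i j. Y i j - Y' i j) a'"
    and a: "0 \<le> a" and a': "0 \<le> a'" and KL: "K \<le> L"
  shows "op_norm_le n (\<lambda>i j. (exp_partial_sum n X L i j - exp_partial_sum n Y L i j)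
                               - (exp_partial_sum n X' K i j - exp_partial_sum n Y' K i j))
     (exp r * a + exp r * a' + 2 * (exp r - (\<Sum>m<K. r ^ m / fact m)))"
proof -
  have h1: "op_norm_le n (\<lambda>i j. exp_partial_sum n X L i j - exp_partial_sum n X' L i j) (exp r * a)"
    by (rule op_norm_le_exp_partial_sum_diff[OF X X' r DX a])
  have h2: "op_norm_le n (\<lambda>i j. exp_partial_sum n Y L i j - exp_partial_sum n Y' L i j) (exp r * a')"
    by (rule op_norm_le_exp_partial_sum_diff[OF Y Y' r DY a'])
  have h3: "op_norm_le n (\<lambda>i j. (exp_partial_sum n X' L i j - exp_partial_sum n Y' L i j)
                                  - (exp_partial_sum n X' K i j - exp_partial_sum n Y' K i j))
      (2 * (exp r - (\<Sum>m<K. r ^ m / fact m)))" by (rule op_norm_le_exp_partial_sum_tail[OF X' Y' r KL])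
  have "op_norm_le n (\<lambda>i j. (exp_partial_sum n X L i j - exp_partial_sum n X' L i j)
                           - (exp_partial_sum n Y L i j - exp_partial_sum n Y' L i j) +
     ((exp_partial_sum n X' L i j - exp_partial_sum n Y' L i j) - (exp_partial_sum n X' K i j - exp_partial_sum n Y' K i j)))
     (exp r * a + exp r * a' + 2 * (exp r - (\<Sum>m<K. r ^ m / fact m)))"
    by (intro op_norm_le_add op_norm_le_diff h1 h2 h3)
  thus ?thesis by (rule op_norm_le_cong[rotated]) (simp add: algebra_simps)
qed

definition mat_fun :: "complex mat \<Rightarrow> nat \<Rightarrow> nat \<Rightarrow> complex" where
  "mat_fun X = (\<lambda>i j. X $$ (i, j))"

lemma pow_mat_entry:
  assumes X: "X \<in> carrier_mat n n"
  shows "i < n \<Longrightarrow> j < n \<Longrightarrow> (X ^\<^sub>m m) $$ (i, j) = mat_power n (mat_fun X) m i j"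
proof (induction m arbitrary: i j)
  case 0 thus ?case using X by auto
next
  case (Suc m)
  have "(X ^\<^sub>m Suc m) $$ (i, j) = row (X ^\<^sub>m m) i \<bullet> col X j"
    using Suc.prems X by simp
  also have "\<dots> = (\<Sum>k<n. (X ^\<^sub>m m) $$ (i, k) * X $$ (k, j))"
    using Suc.prems X by (simp add: scalar_prod_def lessThan_atLeast0)
  also have "\<dots> = (\<Sum>k<n. mat_power n (mat_fun X) m i k * mat_fun X k j)"
    using Suc by (intro sum.cong) (auto simp: mat_fun_def)
  finally show ?case by (simp add: mat_prod_def)
qed

lemma mat_exp_entry:
  assumes X: "X \<in> carrier_mat n n" and ij: "i < n" "j < n"
  shows "mat_exp X $$ (i, j) = (\<Sum>m. mat_power n (mat_fun X) m i j / of_nat (fact m))"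
  using X ij by (simp add: mat_exp_def pow_mat_entry)

lemma mult_mat_vec_entry:
  assumes E: "E \<in> carrier_mat n n" and v: "v \<in> carrier_vec n" and i: "i < n"
  shows "(E *\<^sub>v v) $ i = mat_apply n (mat_fun E) (\<lambda>j. v $ j) i"
  using E v i by (simp add: mult_mat_vec_def scalar_prod_def mat_apply_def mat_fun_def lessThan_atLeast0 mult.commute)

lemma vec_norm2_eq_l2_norm: "v \<in> carrier_vec n \<Longrightarrow> vec_norm2 v = l2_norm n (\<lambda>j. v $ j)"
  by (simp add: vec_norm2_def l2_norm_def)

lemma spec_norm_le_if_op_norm_le:
  assumes E: "E \<in> carrier_mat n n" and nbE: "op_norm_le n (mat_fun E) b" and b: "0 \<le> b"
  shows "spec_norm E \<le> b"
  unfolding spec_norm_def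
proof (rule cSup_least)
  show "{vec_norm2 (E *\<^sub>v v) |v. v \<in> carrier_vec (dim_col E) \<and> vec_norm2 v \<le> 1} \<noteq> {}"
  proof -
    have "vec_norm2 (E *\<^sub>v 0\<^sub>v n) \<in> {vec_norm2 (E *\<^sub>v v) |v. v \<in> carrier_vec (dim_col E) \<and> vec_norm2 v \<le> 1}"
      by (intro CollectI exI[of _ "0\<^sub>v n"]) (use E in \<open>auto simp: vec_norm2_def\<close>)
    thus ?thesis by blast
  qed
next
  fix x assume "x \<in> {vec_norm2 (E *\<^sub>v v) |v. v \<in> carrier_vec (dim_col E) \<and> vec_norm2 v \<le> 1}"
  then obtain v where x: "x = vec_norm2 (E *\<^sub>v v)" and v: "v \<in> carrier_vec n" and v1: "vec_norm2 v \<le> 1"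
    using E by auto
  have Ev: "E *\<^sub>v v \<in> carrier_vec n" using E v by auto
  have "x = l2_norm n (\<lambda>i. (E *\<^sub>v v) $ i)" using x vec_norm2_eq_l2_norm[OF Ev] by simp
  also have "\<dots> = l2_norm n (mat_apply n (mat_fun E) (\<lambda>j. v $ j))"
    by (rule l2_norm_cong) (simp add: mult_mat_vec_entry[OF E v])
  also have "\<dots> \<le> b * l2_norm n (\<lambda>j. v $ j)" using nbE unfolding op_norm_le_def by blast
  also have "\<dots> \<le> b * 1" using v1 vec_norm2_eq_l2_norm[OF v] b by (intro mult_left_mono) auto
  finally show "x \<le> b" by simp
qed

lemma rank_le_card_nonzero_rows:
  assumes "R \<in> carrier_mat n n" and "finite S"
    and "\<And>i j. i < n \<Longrightarrow> j < n \<Longrightarrow> i \<notin> S \<Longrightarrow> R $$ (i, j) = 0"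
  shows "vec_space.rank n R \<le> card S"
  using assms(2,1,3)
proof (induction S arbitrary: R rule: finite_induct)
  case empty
  hence "R = 0\<^sub>m n n" by (intro eq_matI) auto
  thus ?case using vec_space.rank_0I by simp
next
  case (insert x S)
  define R1 where "R1 = mat n n (\<lambda>(i, j). if i = x then R $$ (i, j) else 0)"
  define R2 where "R2 = mat n n (\<lambda>(i, j). if i = x then 0 else R $$ (i, j))"
  have R1c: "R1 \<in> carrier_mat n n" and R2c: "R2 \<in> carrier_mat n n" by (auto simp: R1_def R2_def)
  have "R = R1 + R2" using insert.prems(1) by (intro eq_matI) (auto simp: R1_def R2_def)
  hence "vec_space.rank n R \<le> vec_space.rank n R1 + vec_space.rank n R2"
    using vec_space.rank_subadditive[OF R1c R2c] by simp
  moreover have "vec_space.rank n R1 \<le> 1"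
    by (rule vec_space.rank_le_1_product_entries[OF R1c, of "\<lambda>r. if r = x then 1 else 0" "\<lambda>c. R $$ (x, c)"])
      (auto simp: R1_def)
  moreover have "vec_space.rank n R2 \<le> card S"
    using insert.prems by (intro insert.IH[OF R2c]) (auto simp: R2_def)
  ultimately show ?case using insert.hyps by simp
qed

lemma spec_norm_mat_exp_diff_minus_partial_sums:
  assumes C: "C \<in> carrier_mat n n" and A: "A \<in> carrier_mat n n"
    and rC: "op_norm_le n (mat_fun C) r" and rA: "op_norm_le n (mat_fun A) r"
    and rD: "op_norm_le n D r" and rB: "op_norm_le n B r" and r: "0 \<le> r"
    and CD: "op_norm_le n (\<lambda>i j. mat_fun C i j - D i j) a"
    and AB: "op_norm_le n (\<lambda>i j. mat_fun A i j - B i j) a'"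
    and a: "0 \<le> a" and a': "0 \<le> a'"
  shows "spec_norm (mat_exp C - mat_exp A
            - mat n n (\<lambda>(i, j). exp_partial_sum n D K i j - exp_partial_sum n B K i j))
         \<le> exp r * a + exp r * a' + 2 * (exp r - (\<Sum>m<K. r ^ m / fact m))"
proof -
  define bound where "bound = exp r * a + exp r * a' + 2 * (exp r - (\<Sum>m<K. r ^ m / fact m))"
  define R where "R = (\<lambda>i j. exp_partial_sum n D K i j - exp_partial_sum n B K i j)"
  have est: "op_norm_le n (\<lambda>i j. (exp_partial_sum n (mat_fun C) L i j
                 - exp_partial_sum n (mat_fun A) L i j) - R i j) bound" if "K \<le> L" for L
    unfolding bound_def R_def
    by (rule op_norm_le_exp_partial_sum_split[OF rC rA rD rB r CD AB a a' that])
  have lim: "(\<lambda>L. (exp_partial_sum n (mat_fun C) L i j - exp_partial_sum n (mat_fun A) L i j) - R i j)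
      \<longlonglongrightarrow> (mat_exp C $$ (i, j) - mat_exp A $$ (i, j)) - R i j" if "i < n" "j < n" for i j
    unfolding mat_exp_entry[OF C that] mat_exp_entry[OF A that]
    by (intro tendsto_diff tendsto_const exp_partial_sum_tendsto[OF rC r that]
        exp_partial_sum_tendsto[OF rA r that])
  have expC: "mat_exp C \<in> carrier_mat n n" and expA: "mat_exp A \<in> carrier_mat n n"
    using C A by (auto simp: mat_exp_def)
  have "op_norm_le n (mat_fun (mat_exp C - mat_exp A - mat n n (\<lambda>(i, j). R i j))) bound"
    by (rule op_norm_le_cong[OF _ op_norm_le_limit[OF lim est]]) (use expC expA in \<open>simp_all add: mat_fun_def\<close>)
  moreover have "0 \<le> bound"
    using a a' exp_partial_sum_le_exp[OF r, of K] by (simp add: bound_def)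
  ultimately show ?thesis
    unfolding R_def bound_def[symmetric]
    by (intro spec_norm_le_if_op_norm_le) (use expC expA in auto)
qed

section \<open>Toeplitz matrices and optimal circulants\<close>

definition expi :: "int \<Rightarrow> real \<Rightarrow> complex" where
  "expi k t = exp (\<i> * of_int k * of_real t)"

lemma expi_mult: "expi j t * expi k t = expi (j + k) t"
  by (simp add: expi_def exp_add[symmetric] algebra_simps)

lemma cnj_expi: "cnj (expi k t) = expi (- k) t"
  by (simp add: expi_def exp_cnj)

lemma continuous_on_expi [continuous_intros]: "continuous_on S (expi k)"
  unfolding expi_def by (intro continuous_intros)

lemma expi_pi: "expi k pi = expi k (- pi)"
proof -
  have a: "\<i> * of_int k * of_real pi = (2 * of_int k * of_real pi) * \<i> + \<i> * of_int k * of_real (-pi)"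
    by (simp add: algebra_simps)
  have "expi k pi = exp ((2 * of_int k * of_real pi) * \<i>) * expi k (- pi)"
    unfolding expi_def by (subst a, subst exp_add) (rule refl)
  moreover have "exp ((2 * of_int k * of_real pi) * \<i>) = 1"
    using exp_integer_2pi[of "of_int k"] by simp
  ultimately show ?thesis by simp
qed

lemma has_integral_expi: "(expi k has_integral (if k = 0 then 2 * pi else 0)) {-pi..pi}"
proof (cases "k = 0")
  case True
  have "expi k = (\<lambda>t. 1)" using True by (auto simp: expi_def)
  moreover note has_integral_const_real[of "1::complex" "-pi" pi]
  ultimately show ?thesis using True by (simp add: scaleR_conv_of_real)
next
  case False
  define F where "F = (\<lambda>z. exp (\<i> * of_int k * z) / (\<i> * of_int k))"
  have d: "(F has_field_derivative exp (\<i> * of_int k * z)) (at z)" for z :: complex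
    unfolding F_def using False by (auto intro!: derivative_eq_intros simp: field_simps)
  have "(expi k has_integral (F (of_real pi) - F (of_real (- pi)))) {-pi..pi}"
  proof (rule fundamental_theorem_of_calculus)
    show "- pi \<le> pi" by simp
    fix x assume "x \<in> {-pi..pi}"
    show "((\<lambda>x. F (of_real x)) has_vector_derivative expi k x) (at x within {-pi..pi})"
      unfolding expi_def by (rule has_vector_derivative_real_field[OF d])
  qed
  moreover have "F (of_real pi) = F (of_real (- pi))"
    using expi_pi[of k] by (simp add: F_def expi_def)
  ultimately show ?thesis using False by simp
qed

lemma has_integral_trig_inner:
  "((\<lambda>t. cnj (\<Sum>j<n. p j * expi (int j) t) * (\<Sum>k<n. q k * expi (int k) t)) has_integral
     (2 * pi * (\<Sum>j<n. cnj (p j) * q j))) {-pi..pi}"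
proof -
  have eq: "cnj (\<Sum>j<n. p j * expi (int j) t) * (\<Sum>k<n. q k * expi (int k) t) =
      (\<Sum>j<n. \<Sum>k<n. (cnj (p j) * q k) * expi (int k - int j) t)" for t
  proof -
    have "cnj (\<Sum>j<n. p j * expi (int j) t) * (\<Sum>k<n. q k * expi (int k) t) =
        (\<Sum>j<n. \<Sum>k<n. (cnj (p j) * q k) * (cnj (expi (int j) t) * expi (int k) t))"
      by (simp add: sum_distrib_left sum_distrib_right mult_ac)
    also have "\<dots> = (\<Sum>j<n. \<Sum>k<n. (cnj (p j) * q k) * expi (int k - int j) t)"
      by (simp add: cnj_expi expi_mult)
    finally show ?thesis .
  qed
  have "((\<lambda>t. \<Sum>j<n. \<Sum>k<n. (cnj (p j) * q k) * expi (int k - int j) t) has_integral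
      (\<Sum>j<n. \<Sum>k<n. (cnj (p j) * q k) * (if int k - int j = 0 then 2 * pi else 0))) {-pi..pi}"
    by (intro has_integral_sum has_integral_mult_right has_integral_expi) auto
  moreover have "(\<Sum>j<n. \<Sum>k<n. (cnj (p j) * q k) * (if int k - int j = 0 then 2 * pi else 0)) =
      (\<Sum>j<n. \<Sum>k<n. if k = j then 2 * pi * (cnj (p j) * q j) else 0)"
    by (intro sum.cong) auto
  moreover have "\<dots> = 2 * pi * (\<Sum>j<n. cnj (p j) * q j)"
    by (simp add: sum_distrib_left)
  ultimately show ?thesis unfolding eq by simp
qed

lemma has_integral_trig_norm2:
  "((\<lambda>t. (cmod (\<Sum>j<n. p j * expi (int j) t))\<^sup>2) has_integral
     (2 * pi * (\<Sum>j<n. (cmod (p j))\<^sup>2))) {-pi..pi}"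
proof -
  have H: "((Re \<circ> (\<lambda>t. cnj (\<Sum>j<n. p j * expi (int j) t) * (\<Sum>k<n. p k * expi (int k) t))) has_integral
      Re (2 * pi * (\<Sum>j<n. cnj (p j) * p j))) {-pi..pi}"
    by (rule has_integral_linear[OF has_integral_trig_inner bounded_linear_Re])
  have R: "Re (cnj z * z) = (cmod z)\<^sup>2" for z
    by (simp only: cmod_power2) (simp add: power2_eq_square)
  have F: "(Re \<circ> (\<lambda>t. cnj (\<Sum>j<n. p j * expi (int j) t) * (\<Sum>k<n. p k * expi (int k) t))) =
      (\<lambda>t. (cmod (\<Sum>j<n. p j * expi (int j) t))\<^sup>2)"
    by (rule ext) (simp only: o_def R)
  have "Re (\<Sum>j<n. cnj (p j) * p j) = (\<Sum>j<n. (cmod (p j))\<^sup>2)"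
    unfolding Re_sum by (rule sum.cong) (simp_all only: R)
  moreover have "Re (2 * complex_of_real pi * S) = 2 * pi * Re S" for S by simp
  ultimately have V: "Re (2 * pi * (\<Sum>j<n. cnj (p j) * p j)) = 2 * pi * (\<Sum>j<n. (cmod (p j))\<^sup>2)" by simp
  show ?thesis using H unfolding F V .
qed

lemma has_integral_fourier_coeff:
  assumes g: "continuous_on {-pi..pi} g"
  shows "((\<lambda>t. g t * expi m t) has_integral (2 * pi * fourier_coeff g (- m))) {-pi..pi}"
proof -
  have int: "(\<lambda>t. g t * expi m t) integrable_on {-pi..pi}"
    by (intro integrable_continuous_interval continuous_intros g)
  have "(\<lambda>t. g t * exp (- \<i> * of_int (- m) * of_real t)) = (\<lambda>t. g t * expi m t)"
    by (simp add: expi_def)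
  hence "fourier_coeff g (- m) = integral {-pi..pi} (\<lambda>t. g t * expi m t) / (2 * pi)"
    by (simp add: fourier_coeff_def)
  hence "2 * pi * fourier_coeff g (- m) = integral {-pi..pi} (\<lambda>t. g t * expi m t)"
    by simp
  thus ?thesis using int by (simp add: has_integral_integrable_integral)
qed

lemma has_integral_toeplitz_form:
  assumes g: "continuous_on {-pi..pi} g"
  shows "((\<lambda>t. g t * (cnj (\<Sum>j<n. w j * expi (int j) t) * (\<Sum>k<n. v k * expi (int k) t))) has_integral
     (2 * pi * (\<Sum>j<n. cnj (w j) * mat_apply n (\<lambda>j k. fourier_coeff g (int j - int k)) v j))) {-pi..pi}"
proof -
  have eq: "g t * (cnj (\<Sum>j<n. w j * expi (int j) t) * (\<Sum>k<n. v k * expi (int k) t)) =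
      (\<Sum>j<n. \<Sum>k<n. (cnj (w j) * v k) * (g t * expi (int k - int j) t))" for t
  proof -
    have "g t * (cnj (\<Sum>j<n. w j * expi (int j) t) * (\<Sum>k<n. v k * expi (int k) t)) =
        (\<Sum>j<n. \<Sum>k<n. (cnj (w j) * v k) * (g t * (cnj (expi (int j) t) * expi (int k) t)))"
      by (simp add: sum_distrib_left sum_distrib_right mult_ac)
    also have "\<dots> = (\<Sum>j<n. \<Sum>k<n. (cnj (w j) * v k) * (g t * expi (int k - int j) t))"
      by (simp add: cnj_expi expi_mult)
    finally show ?thesis .
  qed
  have "((\<lambda>t. \<Sum>j<n. \<Sum>k<n. (cnj (w j) * v k) * (g t * expi (int k - int j) t)) has_integral
      (\<Sum>j<n. \<Sum>k<n. (cnj (w j) * v k) * (2 * pi * fourier_coeff g (- (int k - int j))))) {-pi..pi}"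
    by (intro has_integral_sum has_integral_mult_right has_integral_fourier_coeff g) auto
  moreover have "(\<Sum>j<n. \<Sum>k<n. (cnj (w j) * v k) * (2 * pi * fourier_coeff g (- (int k - int j)))) =
      2 * pi * (\<Sum>j<n. cnj (w j) * mat_apply n (\<lambda>j k. fourier_coeff g (int j - int k)) v j)"
    by (simp add: mat_apply_def sum_distrib_left mult_ac)
  ultimately show ?thesis unfolding eq by simp
qed

definition toeplitz_fun :: "(int \<Rightarrow> complex) \<Rightarrow> nat \<Rightarrow> nat \<Rightarrow> complex" where
  "toeplitz_fun b = (\<lambda>j k. b (int j - int k))"

lemma mult_le_weighted_squares: "0 \<le> a \<Longrightarrow> 0 \<le> b \<Longrightarrow> 0 < s \<Longrightarrow> a * b \<le> (s * a\<^sup>2 + (1 / s) * b\<^sup>2) / 2" for a b s :: real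
proof -
  assume s: "0 < s"
  have "0 \<le> (s * a - b)\<^sup>2 / s" using s by simp
  also have "(s * a - b)\<^sup>2 / s = s * a\<^sup>2 + (1 / s) * b\<^sup>2 - 2 * (a * b)"
    using s by (simp add: field_simps power2_eq_square)
  finally show ?thesis by simp
qed

lemma norm_mult_cnj_le_weighted_squares:
  fixes g w v :: complex
  assumes "cmod g \<le> G" and "0 < s"
  shows "cmod (g * (cnj w * v)) \<le> G / 2 * (s * (cmod w)\<^sup>2 + (1 / s) * (cmod v)\<^sup>2)"
proof -
  have "cmod (g * (cnj w * v)) = cmod g * (cmod w * cmod v)" by (simp add: norm_mult)
  also have "\<dots> \<le> G * (cmod w * cmod v)" using assms(1) by (intro mult_right_mono) auto
  also have "\<dots> \<le> G * ((s * (cmod w)\<^sup>2 + (1 / s) * (cmod v)\<^sup>2) / 2)"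
    by (rule mult_left_mono[OF mult_le_weighted_squares]) (use assms order_trans[OF norm_ge_zero assms(1)] in auto)
  finally show ?thesis by simp
qed

lemma l2_norm_power2: "(l2_norm n u)\<^sup>2 = (\<Sum>j<n. (cmod (u j))\<^sup>2)"
  unfolding l2_norm_def by (simp add: sum_nonneg)

lemma toeplitz_apply_norm_power2_le:
  assumes g: "continuous_on {-pi..pi} g" and G: "\<forall>t\<in>{-pi..pi}. cmod (g t) \<le> G"
    and s: "0 < s" and u: "u = mat_apply n (toeplitz_fun (fourier_coeff g)) v"
  shows "(l2_norm n u)\<^sup>2 \<le> G / 2 * (s * (l2_norm n u)\<^sup>2 + (1 / s) * (l2_norm n v)\<^sup>2)"
proof -
  \<comment> \<open>Parseval: \<open>\<parallel>u\<parallel>\<^sup>2 = \<langle>u, T v\<rangle>\<close> is \<open>1/(2\<pi>)\<close> times the integral of \<open>g \<cdot> cnj W \<cdot> V\<close>, where \<open>W\<close>, \<open>V\<close>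
     are the trigonometric polynomials with coefficient vectors \<open>u\<close>, \<open>v\<close>.\<close>
  define W where "W = (\<lambda>t. \<Sum>j<n. u j * expi (int j) t)"
  define V where "V = (\<lambda>t. \<Sum>k<n. v k * expi (int k) t)"
  define I where "I = integral {-pi..pi} (\<lambda>t. g t * (cnj (W t) * V t))"
  have hI: "((\<lambda>t. g t * (cnj (W t) * V t)) has_integral (2 * pi * (\<Sum>j<n. cnj (u j) * u j))) {-pi..pi}"
    using has_integral_toeplitz_form[OF g, where n=n and w=u and v=v] unfolding W_def V_def u toeplitz_fun_def by simp
  hence I: "I = 2 * pi * (\<Sum>j<n. cnj (u j) * u j)" unfolding I_def by (rule integral_unique)
  have S: "(\<Sum>j<n. cnj (u j) * u j) = of_real ((l2_norm n u)\<^sup>2)"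
    unfolding l2_norm_power2 of_real_sum complex_norm_square by (rule sum.cong[OF refl]) (rule mult.commute)
  have hB: "((\<lambda>t. G / 2 * (s * (cmod (W t))\<^sup>2 + (1 / s) * (cmod (V t))\<^sup>2)) has_integral
      (G / 2 * (s * (2 * pi * (l2_norm n u)\<^sup>2) + (1 / s) * (2 * pi * (l2_norm n v)\<^sup>2)))) {-pi..pi}"
    unfolding W_def V_def l2_norm_power2
    by (intro has_integral_mult_right has_integral_add has_integral_trig_norm2)
  have "cmod I \<le> integral {-pi..pi} (\<lambda>t. G / 2 * (s * (cmod (W t))\<^sup>2 + (1 / s) * (cmod (V t))\<^sup>2))"
    unfolding I_def
  proof (rule integral_norm_bound_integral)
    show "(\<lambda>t. g t * (cnj (W t) * V t)) integrable_on {-pi..pi}" using hI by blast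
    show "(\<lambda>t. G / 2 * (s * (cmod (W t))\<^sup>2 + (1 / s) * (cmod (V t))\<^sup>2)) integrable_on {-pi..pi}"
      using hB by blast
    fix t assume t: "t \<in> {-pi..pi}"
    show "norm (g t * (cnj (W t) * V t)) \<le> G / 2 * (s * (cmod (W t))\<^sup>2 + (1 / s) * (cmod (V t))\<^sup>2)"
      by (rule norm_mult_cnj_le_weighted_squares[OF _ s]) (use G t in auto)
  qed
  also have "\<dots> = G / 2 * (s * (2 * pi * (l2_norm n u)\<^sup>2) + (1 / s) * (2 * pi * (l2_norm n v)\<^sup>2))"
    using hB by (rule integral_unique)
  finally have "cmod I \<le> G / 2 * (s * (2 * pi * (l2_norm n u)\<^sup>2) + (1 / s) * (2 * pi * (l2_norm n v)\<^sup>2))" .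
  moreover have "cmod I = 2 * pi * (l2_norm n u)\<^sup>2"
    unfolding I S by (simp only: norm_mult norm_of_real) (simp add: abs_of_nonneg)
  ultimately have "2 * pi * (l2_norm n u)\<^sup>2 \<le> 2 * pi * (G / 2 * (s * (l2_norm n u)\<^sup>2 + (1 / s) * (l2_norm n v)\<^sup>2))"
    by (simp add: algebra_simps)
  thus ?thesis by simp
qed

lemma le_mult_if_power2_le_weighted_squares:
  fixes a b G :: real
  assumes a: "0 \<le> a" and b: "0 \<le> b" and G: "0 \<le> G"
    and key: "\<And>s. 0 < s \<Longrightarrow> a\<^sup>2 \<le> G / 2 * (s * a\<^sup>2 + (1 / s) * b\<^sup>2)"
  shows "a \<le> G * b"
proof (cases "a = 0")
  case True thus ?thesis using G b by simp
next
  case False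
  hence a: "0 < a" using a by simp
  show ?thesis
  proof (cases "b = 0")
    case True
    have "a\<^sup>2 \<le> G / (2 * (G + 1)) * a\<^sup>2"
      using key[of "1 / (G + 1)"] G True by simp
    moreover have "G / (2 * (G + 1)) * a\<^sup>2 < 1 * a\<^sup>2"
      using G a by (intro mult_strict_right_mono) (simp_all add: field_simps)
    ultimately show ?thesis by simp
  next
    case False
    hence b: "0 < b" using b by simp
    have "a\<^sup>2 \<le> G / 2 * ((b / a) * a\<^sup>2 + (1 / (b / a)) * b\<^sup>2)"
      using key[of "b / a"] a b by simp
    also have "\<dots> = G * (a * b)" using a b by (simp add: field_simps power2_eq_square)
    finally have "a * a \<le> (G * b) * a" by (simp add: power2_eq_square mult_ac)
    thus ?thesis using a by simp
  qed
qed

lemma op_norm_le_toeplitz: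
  assumes g: "continuous_on {-pi..pi} g" and G: "\<forall>t\<in>{-pi..pi}. cmod (g t) \<le> G"
  shows "op_norm_le n (toeplitz_fun (fourier_coeff g)) G"
  unfolding op_norm_le_def
proof
  fix v
  have "0 \<le> G" using G norm_ge_zero[of "g 0"] by (meson order_trans atLeastAtMost_iff pi_ge_zero neg_le_0_iff_le)
  then show "l2_norm n (mat_apply n (toeplitz_fun (fourier_coeff g)) v) \<le> G * l2_norm n v"
    by (rule le_mult_if_power2_le_weighted_squares[OF l2_norm_nonneg l2_norm_nonneg _
          toeplitz_apply_norm_power2_le[OF g G _ refl]])
qed

lemma fourier_coeff_diff:
  assumes f: "continuous_on {-pi..pi} f" and g: "continuous_on {-pi..pi} g"
  shows "fourier_coeff (\<lambda>t. f t - g t) m = fourier_coeff f m - fourier_coeff g m"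
proof -
  have i1: "(\<lambda>t. f t * exp (- \<i> * of_int m * of_real t)) integrable_on {-pi..pi}"
    by (intro integrable_continuous_interval continuous_intros f)
  have i2: "(\<lambda>t. g t * exp (- \<i> * of_int m * of_real t)) integrable_on {-pi..pi}"
    by (intro integrable_continuous_interval continuous_intros g)
  have "integral {-pi..pi} (\<lambda>t. (f t - g t) * exp (- \<i> * of_int m * of_real t)) =
      integral {-pi..pi} (\<lambda>t. f t * exp (- \<i> * of_int m * of_real t) - g t * exp (- \<i> * of_int m * of_real t))"
    by (simp add: algebra_simps)
  also have "\<dots> = integral {-pi..pi} (\<lambda>t. f t * exp (- \<i> * of_int m * of_real t)) -
      integral {-pi..pi} (\<lambda>t. g t * exp (- \<i> * of_int m * of_real t))"
    by (rule integral_diff[OF i1 i2])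
  finally have eqI: "integral {-pi..pi} (\<lambda>t. (f t - g t) * exp (- \<i> * of_int m * of_real t)) =
      integral {-pi..pi} (\<lambda>t. f t * exp (- \<i> * of_int m * of_real t)) -
      integral {-pi..pi} (\<lambda>t. g t * exp (- \<i> * of_int m * of_real t))" .
  show ?thesis unfolding fourier_coeff_def eqI by (rule right_diff_distrib)
qed

lemma bij_betw_rotate: "0 < n \<Longrightarrow> bij_betw (\<lambda>j. (j + s) mod n) {..<n} {..<(n::nat)}"
proof -
  assume n: "0 < n"
  have inj: "inj_on (\<lambda>j. (j + s) mod n) {..<n}"
  proof
    fix a b assume a: "a \<in> {..<n}" and b: "b \<in> {..<n}" and e: "(a + s) mod n = (b + s) mod n"
    hence "(int a + int s) mod int n = (int b + int s) mod int n"
      by (metis of_nat_add zmod_int)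
    hence "(int a + int s - int s) mod int n = (int b + int s - int s) mod int n"
      by (rule mod_diff_cong) simp
    hence "int a mod int n = int b mod int n" by simp
    thus "a = b" using a b by simp
  qed
  have "(\<lambda>j. (j + s) mod n) ` {..<n} \<subseteq> {..<n}" using n by auto
  hence "(\<lambda>j. (j + s) mod n) ` {..<n} = {..<n}" using inj by (intro endo_inj_surj) auto
  thus ?thesis using inj by (simp add: bij_betw_def)
qed

lemma sum_rotate: "0 < n \<Longrightarrow> (\<Sum>j<n. F ((j + s) mod n)) = (\<Sum>j<(n::nat). F j)"
proof -
  assume n: "0 < n"
  show ?thesis using sum.reindex_bij_betw[OF bij_betw_rotate[OF n, of s], of F] by simp
qed

lemma l2_norm_rotate: "0 < n \<Longrightarrow> l2_norm n (\<lambda>j. z ((j + s) mod n)) = l2_norm n z"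
  unfolding l2_norm_def using sum_rotate[where n=n and F="\<lambda>j. (cmod (z j))\<^sup>2" and s=s] by simp

lemma rotate_rotate_inverse: "k < n \<Longrightarrow> s < n \<Longrightarrow> ((k + s) mod n + (n - s)) mod n = (k::nat)"
proof -
  assume k: "k < n" and s: "s < n"
  have "((k + s) mod n + (n - s)) mod n = (k + s + (n - s)) mod n" by (simp add: mod_add_left_eq)
  also have "k + s + (n - s) = k + n" using s by simp
  finally show ?thesis using k by simp
qed

lemma op_norm_le_rotate:
  assumes n: "0 < n" and X: "op_norm_le n X b" and s: "s < n"
  shows "op_norm_le n (\<lambda>j k. X ((j + s) mod n) ((k + s) mod n)) b"
  unfolding op_norm_le_def
proof
  fix v :: "nat \<Rightarrow> complex"
  define w where "w = (\<lambda>k. v ((k + (n - s)) mod n))"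
  have eq: "mat_apply n (\<lambda>j k. X ((j + s) mod n) ((k + s) mod n)) v = (\<lambda>j. mat_apply n X w ((j + s) mod n))"
  proof
    fix j
    have "(\<Sum>k<n. X ((j + s) mod n) ((k + s) mod n) * v k)
        = (\<Sum>k<n. (\<lambda>k'. X ((j + s) mod n) k' * w k') ((k + s) mod n))"
      by (rule sum.cong[OF refl]) (simp add: w_def rotate_rotate_inverse[OF _ s])
    also have "\<dots> = (\<Sum>k<n. X ((j + s) mod n) k * w k)" by (rule sum_rotate[OF n])
    finally show "mat_apply n (\<lambda>j k. X ((j + s) mod n) ((k + s) mod n)) v j = mat_apply n X w ((j + s) mod n)"
      by (simp add: mat_apply_def)
  qed
  have "l2_norm n (mat_apply n (\<lambda>j k. X ((j + s) mod n) ((k + s) mod n)) v) = l2_norm n (mat_apply n X w)"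
    unfolding eq by (rule l2_norm_rotate[OF n])
  also have "\<dots> \<le> b * l2_norm n w" using X by (simp add: op_norm_le_def)
  also have "l2_norm n w = l2_norm n v" unfolding w_def by (rule l2_norm_rotate[OF n])
  finally show "l2_norm n (mat_apply n (\<lambda>j k. X ((j + s) mod n) ((k + s) mod n)) v) \<le> b * l2_norm n v" .
qed

lemma op_norm_le_rotation_average:
  assumes n: "0 < n" and X: "op_norm_le n X b"
  shows "op_norm_le n (\<lambda>j k. (1 / of_nat n) * (\<Sum>s<n. X ((j + s) mod n) ((k + s) mod n))) b"
proof -
  have "op_norm_le n (\<lambda>j k. \<Sum>s<n. (1 / of_nat n) * X ((j + s) mod n) ((k + s) mod n))
      (\<Sum>s<n. cmod (1 / of_nat n :: complex) * b)"
    by (intro op_norm_le_sum op_norm_le_scale op_norm_le_rotate[OF n X]) auto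
  also have "(\<Sum>s<n. cmod (1 / of_nat n :: complex) * b) = b"
    using n by (simp add: norm_divide)
  finally show ?thesis by (simp only: sum_distrib_left)
qed

lemma sum_wrapped_diagonal:
  assumes d: "d < (n::nat)"
  shows "(\<Sum>t<n. a (int ((t + d) mod n) - int t)) = of_nat (n - d) * a (int d) + of_nat d * a (int d - int n)"
proof -
  have U: "{..<n} = {..<n - d} \<union> {n - d..<n}" by auto
  have "(\<Sum>t<n. a (int ((t + d) mod n) - int t)) =
      (\<Sum>t<n - d. a (int ((t + d) mod n) - int t)) + (\<Sum>t\<in>{n - d..<n}. a (int ((t + d) mod n) - int t))"
    unfolding U by (rule sum.union_disjoint) auto
  also have "(\<Sum>t<n - d. a (int ((t + d) mod n) - int t)) = (\<Sum>t<n - d. a (int d))"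
  proof (rule sum.cong[OF refl])
    fix t assume "t \<in> {..<n - d}"
    hence "(t + d) mod n = t + d" by simp
    thus "a (int ((t + d) mod n) - int t) = a (int d)" by simp
  qed
  also have "(\<Sum>t\<in>{n - d..<n}. a (int ((t + d) mod n) - int t)) = (\<Sum>t\<in>{n - d..<n}. a (int d - int n))"
  proof (rule sum.cong[OF refl])
    fix t assume t: "t \<in> {n - d..<n}"
    hence "(t + d) mod n = (t + d - n) mod n" using d by (intro le_mod_geq) auto
    also have "\<dots> = t + d - n" using t d by (intro mod_less) auto
    finally have "(t + d) mod n = t + d - n" .
    moreover have "int (t + d - n) = int t + int d - int n" using t d by auto
    ultimately show "a (int ((t + d) mod n) - int t) = a (int d - int n)" by simp
  qed
  finally show ?thesis using d by simp
qed

lemma rotate_diagonal: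
  assumes n: "0 < n" and j: "j < n" and k: "k < n"
  shows "(j + s) mod n = ((k + s) mod n + nat ((int j - int k) mod int n)) mod n"
proof -
  have "int (((k + s) mod n + nat ((int j - int k) mod int n)) mod n) =
      ((int k + int s) mod int n + (int j - int k) mod int n) mod int n"
    using n by (simp add: zmod_int of_nat_mod)
  also have "\<dots> = (int k + int s + (int j - int k)) mod int n" by (simp add: mod_add_eq)
  also have "\<dots> = (int j + int s) mod int n" by (simp add: add.commute)
  also have "\<dots> = int ((j + s) mod n)" by (simp add: zmod_int)
  finally show ?thesis by simp
qed

lemma opt_circ_coeff_eq_rotation_average:
  assumes n: "0 < n" and j: "j < n" and k: "k < n"
  shows "opt_circ_coeff n g (nat ((int j - int k) mod int n)) =
    (1 / of_nat n) * (\<Sum>s<n. fourier_coeff g (int ((j + s) mod n) - int ((k + s) mod n)))"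
proof -
  define d where "d = nat ((int j - int k) mod int n)"
  have d: "d < n" using n unfolding d_def by (simp add: nat_less_iff)
  have "(\<Sum>s<n. fourier_coeff g (int ((j + s) mod n) - int ((k + s) mod n))) =
      (\<Sum>s<n. (\<lambda>t. fourier_coeff g (int ((t + d) mod n) - int t)) ((k + s) mod n))"
    using rotate_diagonal[OF n j k] unfolding d_def by simp
  also have "\<dots> = (\<Sum>t<n. fourier_coeff g (int ((t + d) mod n) - int t))"
    using sum_rotate[OF n, of "\<lambda>t. fourier_coeff g (int ((t + d) mod n) - int t)" k] by (simp add: add.commute)
  also have "\<dots> = of_nat (n - d) * fourier_coeff g (int d) + of_nat d * fourier_coeff g (int d - int n)"
    by (rule sum_wrapped_diagonal[OF d])
  finally have S: "(\<Sum>s<n. fourier_coeff g (int ((j + s) mod n) - int ((k + s) mod n))) =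
      of_nat (n - d) * fourier_coeff g (int d) + of_nat d * fourier_coeff g (int d - int n)" .
  show ?thesis unfolding d_def[symmetric] S opt_circ_coeff_def using d
    by (simp add: of_nat_diff)
qed

lemma op_norm_le_opt_circulant:
  assumes n: "0 < n" and T: "op_norm_le n (toeplitz_fun (fourier_coeff g)) b"
  shows "op_norm_le n (mat_fun (opt_circulant n g)) b"
proof -
  have N: "op_norm_le n (\<lambda>j k. (1 / of_nat n) * (\<Sum>s<n. fourier_coeff g (int ((j + s) mod n) - int ((k + s) mod n)))) b"
    using op_norm_le_rotation_average[OF n T] by (simp add: toeplitz_fun_def)
  show ?thesis
    by (rule op_norm_le_cong[OF _ N]) (simp add: mat_fun_def opt_circulant_def opt_circ_coeff_eq_rotation_average[OF n])
qed

lemma mat_fun_toeplitz_mat: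
  "i < n \<Longrightarrow> j < n \<Longrightarrow> mat_fun (toeplitz_mat n f) i j = toeplitz_fun (fourier_coeff f) i j"
  by (simp add: mat_fun_def toeplitz_mat_def toeplitz_fun_def)

lemma opt_circ_coeff_diff:
  assumes f: "continuous_on {-pi..pi} f" and p: "continuous_on {-pi..pi} p"
  shows "opt_circ_coeff n (\<lambda>t. f t - p t) d = opt_circ_coeff n f d - opt_circ_coeff n p d"
proof -
  have "opt_circ_coeff n (\<lambda>t. f t - p t) d =
     ((of_nat n - of_nat d) * (fourier_coeff f (int d) - fourier_coeff p (int d))
      + of_nat d * (fourier_coeff f (int d - int n) - fourier_coeff p (int d - int n))) / of_nat n"
    by (simp only: opt_circ_coeff_def fourier_coeff_diff[OF f p])
  also have "\<dots> = (((of_nat n - of_nat d) * fourier_coeff f (int d) + of_nat d * fourier_coeff f (int d - int n))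
      - ((of_nat n - of_nat d) * fourier_coeff p (int d) + of_nat d * fourier_coeff p (int d - int n))) / of_nat n"
    by (simp only: algebra_simps)
  also have "\<dots> = opt_circ_coeff n f d - opt_circ_coeff n p d"
    by (simp only: opt_circ_coeff_def diff_divide_distrib)
  finally show ?thesis .
qed

lemma op_norm_le_toeplitz_diff:
  assumes f: "continuous_on {-pi..pi} f" and p: "continuous_on {-pi..pi} p"
    and fp: "\<forall>t\<in>{-pi..pi}. cmod (f t - p t) \<le> \<delta>"
  shows "op_norm_le n (\<lambda>i j. toeplitz_fun (fourier_coeff f) i j - toeplitz_fun (fourier_coeff p) i j) \<delta>"
  by (rule op_norm_le_cong[OF _ op_norm_le_toeplitz[OF continuous_on_diff[OF f p] fp]])
    (simp add: toeplitz_fun_def fourier_coeff_diff[OF f p])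

lemma op_norm_le_opt_circulant_diff:
  assumes n: "0 < n" and f: "continuous_on {-pi..pi} f" and p: "continuous_on {-pi..pi} p"
    and fp: "\<forall>t\<in>{-pi..pi}. cmod (f t - p t) \<le> \<delta>"
  shows "op_norm_le n (\<lambda>i j. mat_fun (opt_circulant n f) i j - mat_fun (opt_circulant n p) i j) \<delta>"
  by (rule op_norm_le_cong[OF _ op_norm_le_opt_circulant[OF n op_norm_le_toeplitz[OF continuous_on_diff[OF f p] fp]]])
    (simp add: mat_fun_def opt_circulant_def opt_circ_coeff_diff[OF f p])

section \<open>Approximation by trigonometric polynomials\<close>

definition trig_poly :: "(complex \<times> int) list \<Rightarrow> real \<Rightarrow> complex" where
  "trig_poly xs t = (\<Sum>p\<leftarrow>xs. fst p * expi (snd p) t)"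

definition trig_poly_prod :: "(complex \<times> int) list \<Rightarrow> (complex \<times> int) list \<Rightarrow> (complex \<times> int) list" where
  "trig_poly_prod xs ys = concat (map (\<lambda>p. map (\<lambda>q. (fst p * fst q, snd p + snd q)) ys) xs)"

lemma trig_poly_Nil [simp]: "trig_poly [] t = 0" by (simp add: trig_poly_def)
lemma trig_poly_Cons [simp]: "trig_poly (p # xs) t = fst p * expi (snd p) t + trig_poly xs t" by (simp add: trig_poly_def)
lemma trig_poly_append: "trig_poly (xs @ ys) t = trig_poly xs t + trig_poly ys t" by (simp add: trig_poly_def)

lemma trig_poly_scale: "trig_poly (map (\<lambda>p. (a * fst p, snd p)) xs) t = a * trig_poly xs t"
  by (induction xs) (auto simp: algebra_simps)

lemma trig_poly_prod_eq: "trig_poly (trig_poly_prod xs ys) t = trig_poly xs t * trig_poly ys t"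
proof (induction xs)
  case Nil thus ?case by (simp add: trig_poly_prod_def)
next
  case (Cons p xs)
  have "trig_poly (map (\<lambda>q. (fst p * fst q, snd p + snd q)) ys) t = fst p * expi (snd p) t * trig_poly ys t"
    by (induction ys) (auto simp: algebra_simps expi_mult[symmetric])
  thus ?case using Cons by (simp add: trig_poly_prod_def trig_poly_append algebra_simps)
qed

lemma continuous_on_trig_poly [continuous_intros]: "continuous_on S (trig_poly xs)"
  by (induction xs) (auto intro!: continuous_intros)

lemma fourier_coeff_eq_integral:
  assumes "((\<lambda>t. g t * expi (- m) t) has_integral I) {-pi..pi}"
  shows "fourier_coeff g m = I / (2 * pi)"
proof -
  have "(\<lambda>t. g t * exp (- \<i> * of_int m * of_real t)) = (\<lambda>t. g t * expi (- m) t)"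
    by (simp add: expi_def)
  thus ?thesis using assms by (simp add: fourier_coeff_def integral_unique)
qed

lemma has_integral_trig_poly_expi:
  fixes xs :: "(complex \<times> int) list"
  shows "((\<lambda>t. trig_poly xs t * expi (- m) t) has_integral
           (2 * complex_of_real pi * (\<Sum>p\<leftarrow>xs. if snd p = m then fst p else 0))) {-pi..pi}"
proof (induction xs)
  case Nil thus ?case by simp
next
  case (Cons p xs)
  have e: "trig_poly (p # xs) t * expi (- m) t = fst p * expi (snd p - m) t + trig_poly xs t * expi (- m) t" for t
    by (simp add: algebra_simps expi_mult)
  note h1 = has_integral_mult_right[OF has_integral_expi[of "snd p - m"], of "fst p"]
  note h2 = has_integral_add[OF h1 Cons.IH]
  from h2 show ?case unfolding e by (rule has_integral_eq_rhs) (simp add: algebra_simps)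
qed

lemma fourier_coeff_trig_poly: "fourier_coeff (trig_poly xs) m = (\<Sum>p\<leftarrow>xs. if snd p = m then fst p else (0::complex))"
  using fourier_coeff_eq_integral[OF has_integral_trig_poly_expi[of xs m]] by simp

lemma cos_eq_expi: "complex_of_real (cos t) = (expi 1 t + expi (-1) t) / 2"
  unfolding expi_def cos_of_real[symmetric] cos_exp_eq by simp

lemma sin_eq_expi: "complex_of_real (sin t) = (expi 1 t - expi (-1) t) / (2 * \<i>)"
  unfolding expi_def sin_of_real[symmetric] sin_exp_eq by simp

lemma real_polynomial_function_on_circle:
  fixes h :: "complex \<Rightarrow> real"
  assumes "real_polynomial_function h"
  shows "\<exists>xs. \<forall>t. complex_of_real (h (cis t)) = trig_poly xs t"
  using assms
proof (induction h rule: real_polynomial_function.induct)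
  case (linear h)
  interpret bounded_linear h by fact
  have hz: "h z = Re z * h 1 + Im z * h \<i>" for z
  proof -
    have "z = Re z *\<^sub>R 1 + Im z *\<^sub>R \<i>" by (simp add: complex_eq_iff)
    hence "h z = h (Re z *\<^sub>R 1 + Im z *\<^sub>R \<i>)" by simp
    also have "\<dots> = Re z * h 1 + Im z * h \<i>" by (simp add: add scaleR)
    finally show ?thesis .
  qed
  define xs where "xs = [(of_real (h 1) / 2 + of_real (h \<i>) / (2 * \<i>), 1::int),
                       (of_real (h 1) / 2 - of_real (h \<i>) / (2 * \<i>), -1)]"
  have "complex_of_real (h (cis t)) = trig_poly xs t" for t
  proof -
    have "complex_of_real (h (cis t)) = of_real (cos t) * of_real (h 1) + of_real (sin t) * of_real (h \<i>)"
      by (simp only: hz[of "cis t"]) simp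
    also have "\<dots> = trig_poly xs t" unfolding cos_eq_expi sin_eq_expi xs_def
      by (simp add: field_simps)
    finally show ?thesis .
  qed
  thus ?case by blast
next
  case (const c)
  have "complex_of_real c = trig_poly [(of_real c, 0)] t" for t by (simp add: expi_def)
  thus ?case by blast
next
  case (add f g)
  then obtain xs ys where "\<forall>t. complex_of_real (f (cis t)) = trig_poly xs t" "\<forall>t. complex_of_real (g (cis t)) = trig_poly ys t"
    by blast
  hence "\<forall>t. complex_of_real (f (cis t) + g (cis t)) = trig_poly (xs @ ys) t" by (simp add: trig_poly_append)
  thus ?case by blast
next
  case (mult f g)
  then obtain xs ys where "\<forall>t. complex_of_real (f (cis t)) = trig_poly xs t" "\<forall>t. complex_of_real (g (cis t)) = trig_poly ys t"
    by blast
  hence "\<forall>t. complex_of_real (f (cis t) * g (cis t)) = trig_poly (trig_poly_prod xs ys) t" by (simp add: trig_poly_prod_eq)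
  thus ?case by blast
qed

lemma polynomial_function_on_circle:
  fixes g :: "complex \<Rightarrow> complex"
  assumes "polynomial_function g"
  shows "\<exists>xs. \<forall>t. g (cis t) = trig_poly xs t"
proof -
  have "real_polynomial_function (Re \<circ> g)" "real_polynomial_function (Im \<circ> g)"
    using assms bounded_linear_Re bounded_linear_Im unfolding polynomial_function_def by auto
  then obtain xs ys where xs: "\<forall>t. complex_of_real (Re (g (cis t))) = trig_poly xs t"
      and ys: "\<forall>t. complex_of_real (Im (g (cis t))) = trig_poly ys t"
    using real_polynomial_function_on_circle[of "Re \<circ> g"] real_polynomial_function_on_circle[of "Im \<circ> g"] by auto
  have "g (cis t) = trig_poly (xs @ map (\<lambda>p. (\<i> * fst p, snd p)) ys) t" for t
    using complex_eq[of "g (cis t)"] xs ys by (simp add: trig_poly_append trig_poly_scale)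
  thus ?thesis by blast
qed

lemma continuous_on_circle_lift:
  fixes f :: "real \<Rightarrow> complex"
  assumes cont: "continuous_on {-pi..pi} f" and ends: "f (-pi) = f pi"
  obtains F where "continuous_on (sphere 0 1) F" "\<And>t. t \<in> {-pi..pi} \<Longrightarrow> F (cis t) = f t"
proof -
  define F where "F z = (if 0 \<le> Im z then f (arccos (Re z)) else f (- arccos (Re z)))" for z
  define S1 where "S1 = sphere (0::complex) 1 \<inter> {z. 0 \<le> Im z}"
  define S2 where "S2 = sphere (0::complex) 1 \<inter> {z. Im z \<le> 0}"
  have U: "sphere 0 1 = S1 \<union> S2" by (auto simp: S1_def S2_def)
  have cS1: "closed S1" unfolding S1_def
    by (intro closed_Int closed_sphere closed_Collect_le continuous_intros)
  have cS2: "closed S2" unfolding S2_def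
    by (intro closed_Int closed_sphere closed_Collect_le continuous_intros)
  have re: "-1 \<le> Re z \<and> Re z \<le> 1" if "z \<in> sphere 0 1" for z
    using that abs_Re_le_cmod[of z] by auto
  have arccos: "-pi \<le> arccos (Re z)" "arccos (Re z) \<le> pi" "-pi \<le> - arccos (Re z)" "- arccos (Re z) \<le> pi"
    if "cmod z = 1" for z
    using re[of z] that arccos_lbound[of "Re z"] arccos_ubound[of "Re z"] by auto
  have c1: "continuous_on S1 (\<lambda>z. f (arccos (Re z)))"
    by (rule continuous_on_compose2[OF cont]) (auto intro!: continuous_intros simp: S1_def re arccos)
  have c2: "continuous_on S2 (\<lambda>z. f (- arccos (Re z)))"
    by (rule continuous_on_compose2[OF cont]) (auto intro!: continuous_intros simp: S2_def re arccos)
  have "continuous_on (sphere 0 1) F"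
    unfolding U F_def
  proof (rule continuous_on_cases_local)
    show "closedin (top_of_set (S1 \<union> S2)) S1" using cS1 by (intro closed_subset) auto
    show "closedin (top_of_set (S1 \<union> S2)) S2" using cS2 by (intro closed_subset) auto
    show "continuous_on S1 (\<lambda>z. f (arccos (Re z)))" by (rule c1)
    show "continuous_on S2 (\<lambda>z. f (- arccos (Re z)))" by (rule c2)
    fix x assume "x \<in> S1 \<and> \<not> 0 \<le> Im x \<or> x \<in> S2 \<and> 0 \<le> Im x"
    hence "Im x = 0" and "cmod x = 1" by (auto simp: S1_def S2_def)
    hence "Re x = 1 \<or> Re x = -1" using cmod_eq_Re[of x] by auto
    thus "f (arccos (Re x)) = f (- arccos (Re x))" using ends by auto
  qed
  moreover have "F (cis t) = f t" if t: "t \<in> {-pi..pi}" for t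
  proof -
    consider "0 \<le> t" | "t = -pi" | "-pi < t \<and> t < 0" using t by fastforce
    thus ?thesis
    proof cases
      case 1
      hence "0 \<le> sin t" using t by (intro sin_ge_zero) auto
      thus ?thesis using 1 t by (simp add: F_def arccos_cos)
    next
      case 2
      thus ?thesis using ends by (simp add: F_def)
    next
      case 3
      hence "0 < sin (- t)" by (intro sin_gt_zero) auto
      hence "\<not> 0 \<le> sin t" by simp
      thus ?thesis using 3 by (simp add: F_def arccos_cos2)
    qed
  qed
  ultimately show thesis by (rule that)
qed

lemma trig_poly_approx:
  fixes f :: "real \<Rightarrow> complex"
  assumes cont: "continuous_on {-pi..pi} f" and ends: "f (-pi) = f pi" and \<delta>: "0 < \<delta>"
  obtains xs where "\<forall>t\<in>{-pi..pi}. cmod (f t - trig_poly xs t) < \<delta>"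
proof -
  obtain F where contF: "continuous_on (sphere 0 1) F" and F: "\<And>t. t \<in> {-pi..pi} \<Longrightarrow> F (cis t) = f t"
    using continuous_on_circle_lift[OF cont ends] by blast
  obtain g where pg: "polynomial_function g" and gF: "\<forall>z\<in>sphere 0 1. norm (F z - g z) < \<delta>"
    using Stone_Weierstrass_polynomial_function[OF compact_sphere contF \<delta>] by blast
  obtain xs where xs: "\<forall>t. g (cis t) = trig_poly xs t" using polynomial_function_on_circle[OF pg] by blast
  have "cmod (f t - trig_poly xs t) < \<delta>" if "t \<in> {-pi..pi}" for t
    using gF[rule_format, of "cis t"] F[OF that] xs by simp
  then show thesis by (intro that) blast
qed

lemma fourier_coeff_trig_poly_eq_0:
  assumes "\<bar>m\<bar> > int (sum_list (map (\<lambda>p. nat \<bar>snd p\<bar>) xs))"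
  shows "fourier_coeff (trig_poly xs) m = 0"
proof -
  have "(if snd p = m then fst p else 0) = 0" if "p \<in> set xs" for p
  proof -
    have "nat \<bar>snd p\<bar> \<le> sum_list (map (\<lambda>p. nat \<bar>snd p\<bar>) xs)"
      using that by (intro member_le_sum_list) auto
    thus ?thesis using assms by auto
  qed
  hence "(\<Sum>p\<leftarrow>xs. if snd p = m then fst p else (0::complex)) = (\<Sum>p\<leftarrow>xs. 0)"
    by (intro arg_cong[of _ _ sum_list] map_cong) auto
  thus ?thesis by (simp add: fourier_coeff_trig_poly)
qed

lemma norm_fourier_coeff_trig_poly_le: "cmod (fourier_coeff (trig_poly xs) m) \<le> sum_list (map (\<lambda>p. cmod (fst p)) xs)"
  unfolding fourier_coeff_trig_poly
proof (induction xs)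
  case Nil thus ?case by simp
next
  case (Cons p xs)
  have "cmod (if snd p = m then fst p else 0) \<le> cmod (fst p)" by simp
  thus ?case using Cons by (simp add: order_trans[OF norm_triangle_ineq] add_mono)
qed

lemma band_limited_approx:
  fixes f :: "real \<Rightarrow> complex"
  assumes cont: "continuous_on {-pi..pi} f" and ends: "f (-pi) = f pi" and \<delta>: "0 < \<delta>"
  obtains p M0 Bx where "continuous_on {-pi..pi} p" "\<forall>t\<in>{-pi..pi}. cmod (f t - p t) \<le> \<delta>"
    "\<And>m. \<bar>m\<bar> > int M0 \<Longrightarrow> fourier_coeff p m = 0" "\<And>m. cmod (fourier_coeff p m) \<le> Bx"
proof -
  obtain xs where "\<forall>t\<in>{-pi..pi}. cmod (f t - trig_poly xs t) < \<delta>"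
    using trig_poly_approx[OF cont ends \<delta>] by blast
  then show thesis
    by (intro that[of "trig_poly xs" "sum_list (map (\<lambda>p. nat \<bar>snd p\<bar>) xs)" "sum_list (map (\<lambda>p. cmod (fst p)) xs)"])
      (auto intro: continuous_on_trig_poly fourier_coeff_trig_poly_eq_0 norm_fourier_coeff_trig_poly_le less_imp_le)
qed

section \<open>Banded Toeplitz matrices and their wrapped circulants\<close>

text \<open>For b supported in [-M0, M0] and n > 2 M0 this is Strang's circulant preconditioner of the
banded Toeplitz matrix \<open>toeplitz_fun b\<close>.\<close>

definition wrap_circulant :: "nat \<Rightarrow> (int \<Rightarrow> complex) \<Rightarrow> nat \<Rightarrow> nat \<Rightarrow> complex" where
  "wrap_circulant n b = (\<lambda>j k. b ((int j - int k) mod int n) + b ((int j - int k) mod int n - int n))"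

lemma wrap_circulant_eq_toeplitz_fun:
  assumes bz: "\<And>m. \<bar>m\<bar> > int M0 \<Longrightarrow> b m = 0"
    and i1: "M0 \<le> i" and i2: "i + M0 < n" and l: "l < n"
  shows "wrap_circulant n b i l = toeplitz_fun b i l"
proof (cases "int i - int l \<ge> 0")
  case True
  have "(int i - int l) mod int n = int i - int l" using True i2 l by (intro mod_pos_pos_trivial) auto
  moreover have "b (int i - int l - int n) = 0" using i2 True by (intro bz) auto
  ultimately show ?thesis by (simp add: wrap_circulant_def toeplitz_fun_def)
next
  case False
  have "(int i - int l) mod int n = (int i - int l + int n) mod int n" by simp
  also have "\<dots> = int i - int l + int n" using False l by (intro mod_pos_pos_trivial) auto
  finally have e: "(int i - int l) mod int n = int i - int l + int n" .
  have "b (int i - int l + int n) = 0" using i1 l by (intro bz) auto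
  thus ?thesis using e by (simp add: wrap_circulant_def toeplitz_fun_def)
qed

lemma toeplitz_fun_power_band:
  assumes bz: "\<And>m. \<bar>m\<bar> > int M0 \<Longrightarrow> b m = 0"
  shows "\<bar>int i - int l\<bar> > int (m * M0) \<Longrightarrow> mat_power n (toeplitz_fun b) m i l = 0"
proof (induction m arbitrary: l)
  case 0 thus ?case by auto
next
  case (Suc m)
  have "mat_power n (toeplitz_fun b) m i k * toeplitz_fun b k l = 0" for k
  proof (cases "\<bar>int i - int k\<bar> > int (m * M0)")
    case True thus ?thesis using Suc.IH by simp
  next
    case False
    hence "\<bar>int k - int l\<bar> > int M0" using Suc.prems by auto
    thus ?thesis using bz by (simp add: toeplitz_fun_def)
  qed
  thus ?case by (simp add: mat_prod_def)
qed

lemma wrap_circulant_power_eq: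
  assumes bz: "\<And>m. \<bar>m\<bar> > int M0 \<Longrightarrow> b m = 0"
  shows "m * M0 \<le> i \<Longrightarrow> i + m * M0 < n \<Longrightarrow> j < n \<Longrightarrow>
    mat_power n (wrap_circulant n b) m i j = mat_power n (toeplitz_fun b) m i j"
proof (induction m arbitrary: j)
  case 0 thus ?case by simp
next
  case (Suc m)
  have "mat_power n (wrap_circulant n b) m i l * wrap_circulant n b l j
      = mat_power n (toeplitz_fun b) m i l * toeplitz_fun b l j" if l: "l < n" for l
  proof -
    have e1: "mat_power n (wrap_circulant n b) m i l = mat_power n (toeplitz_fun b) m i l" using Suc.prems l by (intro Suc.IH) auto
    show ?thesis
    proof (cases "\<bar>int i - int l\<bar> > int (m * M0)")
      case True thus ?thesis using e1 toeplitz_fun_power_band[OF bz True] by simp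
    next
      case False
      define c where "c = m * M0"
      have h: "\<bar>int i - int l\<bar> \<le> int c" using False by (simp add: c_def)
      have p: "c + M0 \<le> i" "i + (c + M0) < n" using Suc.prems by (simp_all add: c_def add.commute)
      have "M0 \<le> l" "l + M0 < n" using h p by linarith+
      hence "wrap_circulant n b l j = toeplitz_fun b l j" using Suc.prems by (intro wrap_circulant_eq_toeplitz_fun[OF bz]) auto
      thus ?thesis using e1 by simp
    qed
  qed
  thus ?case by (simp add: mat_prod_def)
qed

lemma wrap_circulant_exp_partial_sum_eq:
  assumes bz: "\<And>m. \<bar>m\<bar> > int M0 \<Longrightarrow> b m = 0"
    and i1: "K * M0 \<le> i" and i2: "i + K * M0 < n" and j: "j < n"
  shows "exp_partial_sum n (wrap_circulant n b) K i j = exp_partial_sum n (toeplitz_fun b) K i j"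
proof -
  have "mat_power n (wrap_circulant n b) m i j = mat_power n (toeplitz_fun b) m i j" if "m < K" for m
  proof (rule wrap_circulant_power_eq[OF bz _ _ j])
    have "m * M0 \<le> K * M0" using that by simp
    thus "m * M0 \<le> i" "i + m * M0 < n" using i1 i2 by linarith+
  qed
  thus ?thesis by (simp add: exp_partial_sum_def)
qed

lemma card_boundary_rows: "card {i. i < n \<and> \<not> (K * M0 \<le> i \<and> i + K * M0 < n)} \<le> 2 * (K * M0)"
proof -
  have "{i. i < n \<and> \<not> (K * M0 \<le> i \<and> i + K * M0 < n)} \<subseteq> {..<K * M0} \<union> {n - K * M0..<n}" by auto
  hence "card {i. i < n \<and> \<not> (K * M0 \<le> i \<and> i + K * M0 < n)} \<le> card ({..<K * M0} \<union> {n - K * M0..<n})"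
    by (intro card_mono) auto
  also have "\<dots> \<le> card {..<K * M0} + card {n - K * M0..<n}" by (rule card_Un_le)
  also have "\<dots> \<le> 2 * (K * M0)" by simp
  finally show ?thesis .
qed

lemma rank_exp_partial_sum_wrap_circulant_minus_toeplitz:
  assumes band: "\<And>m. \<bar>m\<bar> > int M0 \<Longrightarrow> b m = 0"
  shows "vec_space.rank n (mat n n (\<lambda>(i, j). exp_partial_sum n (wrap_circulant n b) K i j
            - exp_partial_sum n (toeplitz_fun b) K i j)) \<le> 2 * (K * M0)"
proof -
  let ?S = "{i. i < n \<and> \<not> (K * M0 \<le> i \<and> i + K * M0 < n)}"
  have "vec_space.rank n (mat n n (\<lambda>(i, j). exp_partial_sum n (wrap_circulant n b) K i j
            - exp_partial_sum n (toeplitz_fun b) K i j)) \<le> card ?S"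
    by (rule rank_le_card_nonzero_rows) (auto simp: wrap_circulant_exp_partial_sum_eq[OF band])
  also have "card ?S \<le> 2 * (K * M0)" by (rule card_boundary_rows)
  finally show ?thesis .
qed

lemma inj_on_diff_mod:
  assumes "0 < n"
  shows "inj_on (\<lambda>k. (int j - int k) mod int n) {..<n}"
proof
  fix a b assume a: "a \<in> {..<n}" and b: "b \<in> {..<n}"
    and e: "(int j - int a) mod int n = (int j - int b) mod int n"
  hence "int n dvd ((int j - int a) - (int j - int b))" by (simp add: mod_eq_dvd_iff)
  hence d: "int n dvd (int b - int a)" by simp
  show "a = b"
  proof (rule ccontr)
    assume "a \<noteq> b"
    hence "int b - int a \<noteq> 0" by simp
    hence "\<bar>int n\<bar> \<le> \<bar>int b - int a\<bar>" using d by (rule dvd_imp_le_int)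
    thus False using a b by auto
  qed
qed

lemma norm_opt_minus_wrap_coeff:
  fixes b :: "int \<Rightarrow> complex"
  assumes bz: "\<And>m. \<bar>m\<bar> > int M0 \<Longrightarrow> b m = 0" and bB: "\<And>m. cmod (b m) \<le> Bx"
    and n: "0 < n" and x0: "0 \<le> x" and xn: "x < int n"
  shows "cmod (((of_nat n - of_int x) * b x + of_int x * b (x - int n)) / of_nat n - (b x + b (x - int n)))
     \<le> (if x \<le> int M0 \<or> int n - x \<le> int M0 then 2 * real M0 * Bx / real n else 0)"
proof -
  have eq: "((of_nat n - of_int x) * b x + of_int x * b (x - int n)) / of_nat n - (b x + b (x - int n)) =
      - (of_int x * b x + (of_nat n - of_int x) * b (x - int n)) / of_nat n"
    using n by (simp add: field_simps)
  have B0: "0 \<le> Bx" using bB[of 0] norm_ge_zero[of "b 0"] by linarith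
  have t1: "cmod (of_int x * b x) \<le> (if x \<le> int M0 then real M0 * Bx else 0)"
  proof (cases "x \<le> int M0")
    case True
    have "cmod (of_int x * b x) = real_of_int x * cmod (b x)" using x0 by (simp add: norm_mult)
    also have "\<dots> \<le> real M0 * Bx" using True x0 bB[of x] B0 by (intro mult_mono) auto
    finally show ?thesis using True by simp
  next
    case False thus ?thesis using bz[of x] x0 by simp
  qed
  have t2: "cmod ((of_nat n - of_int x) * b (x - int n)) \<le> (if int n - x \<le> int M0 then real M0 * Bx else 0)"
  proof (cases "int n - x \<le> int M0")
    case True
    have e: "(of_nat n - of_int x :: complex) = of_real (real_of_int (int n - x))" by simp
    have "cmod ((of_nat n - of_int x) * b (x - int n)) = \<bar>real_of_int (int n - x)\<bar> * cmod (b (x - int n))"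
      unfolding e norm_mult norm_of_real ..
    also have "\<bar>real_of_int (int n - x)\<bar> = real_of_int (int n - x)" using xn by simp
    finally have "cmod ((of_nat n - of_int x) * b (x - int n)) = real_of_int (int n - x) * cmod (b (x - int n))" .
    also have "\<dots> \<le> real M0 * Bx" using True xn bB[of "x - int n"] B0 by (intro mult_mono) auto
    finally show ?thesis using True by simp
  next
    case False thus ?thesis using bz[of "x - int n"] xn by simp
  qed
  have "cmod (- (of_int x * b x + (of_nat n - of_int x) * b (x - int n)) / of_nat n) =
      cmod (of_int x * b x + (of_nat n - of_int x) * b (x - int n)) / real n"
    by (simp only: norm_divide norm_minus_cancel norm_of_nat)
  also have "\<dots> \<le> ((if x \<le> int M0 then real M0 * Bx else 0) + (if int n - x \<le> int M0 then real M0 * Bx else 0)) / real n"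
    using n by (intro divide_right_mono order_trans[OF norm_triangle_ineq] add_mono t1 t2) auto
  also have "\<dots> \<le> (if x \<le> int M0 \<or> int n - x \<le> int M0 then 2 * real M0 * Bx / real n else 0)"
    using B0 n by (auto simp: field_simps)
  finally show ?thesis unfolding eq .
qed

definition wrapped_band :: "nat \<Rightarrow> nat \<Rightarrow> int set" where
  "wrapped_band n M0 = {x. 0 \<le> x \<and> x < int n \<and> (x \<le> int M0 \<or> int n - x \<le> int M0)}"

lemma card_wrapped_band: "card (wrapped_band n M0) \<le> 2 * M0 + 1"
proof -
  have "wrapped_band n M0 \<subseteq> {0..int M0} \<union> {int n - int M0..int n - 1}"
    by (auto simp: wrapped_band_def)
  hence "card (wrapped_band n M0) \<le> card ({0..int M0} \<union> {int n - int M0..int n - 1})"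
    by (intro card_mono) auto
  also have "\<dots> \<le> card {0..int M0} + card {int n - int M0..int n - 1}" by (rule card_Un_le)
  also have "\<dots> = 2 * M0 + 1" by simp
  finally show ?thesis .
qed

lemma card_row_wrapped_band:
  assumes n: "0 < n"
  shows "card {k. k < n \<and> (int j - int k) mod int n \<in> wrapped_band n M0} \<le> 2 * M0 + 1"
proof -
  have "card {k. k < n \<and> (int j - int k) mod int n \<in> wrapped_band n M0} \<le> card (wrapped_band n M0)"
  proof (rule card_inj_on_le)
    show "inj_on (\<lambda>k. (int j - int k) mod int n) {k. k < n \<and> (int j - int k) mod int n \<in> wrapped_band n M0}"
      using inj_on_diff_mod[OF n, of j] by (rule inj_on_subset) auto
    show "finite (wrapped_band n M0)"
      by (rule finite_subset[of _ "{0..int n}"]) (auto simp: wrapped_band_def)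
  qed auto
  also have "\<dots> \<le> 2 * M0 + 1" by (rule card_wrapped_band)
  finally show ?thesis .
qed

lemma op_norm_le_opt_minus_wrap:
  fixes b :: "int \<Rightarrow> complex"
  assumes bz: "\<And>m. \<bar>m\<bar> > int M0 \<Longrightarrow> b m = 0" and bB: "\<And>m. cmod (b m) \<le> Bx"
    and n: "0 < n"
  shows "op_norm_le n (\<lambda>j k. let x = (int j - int k) mod int n in
      ((of_nat n - of_int x) * b x + of_int x * b (x - int n)) / of_nat n - (b x + b (x - int n)))
     (sqrt (real n * (real (2 * M0 + 1) * (2 * real M0 * Bx / real n)\<^sup>2)))"
    (is "op_norm_le n ?E _")
proof -
  define C where "C = 2 * real M0 * Bx / real n"
  have ent: "(cmod (?E j k))\<^sup>2 \<le> (if (int j - int k) mod int n \<in> wrapped_band n M0 then C\<^sup>2 else 0)"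
    if "j < n" "k < n" for j k
  proof -
    define x where "x = (int j - int k) mod int n"
    have x0: "0 \<le> x" and xn: "x < int n" using n by (simp_all add: x_def)
    have "cmod (?E j k) \<le> (if x \<le> int M0 \<or> int n - x \<le> int M0 then C else 0)"
      unfolding x_def[symmetric] Let_def C_def by (rule norm_opt_minus_wrap_coeff[OF bz bB n x0 xn])
    hence "(cmod (?E j k))\<^sup>2 \<le> (if x \<le> int M0 \<or> int n - x \<le> int M0 then C else 0)\<^sup>2"
      by (intro power_mono) auto
    moreover have "(if x \<le> int M0 \<or> int n - x \<le> int M0 then C else 0)\<^sup>2
        = (if x \<in> wrapped_band n M0 then C\<^sup>2 else 0)"
      using x0 xn by (simp add: wrapped_band_def)
    ultimately show ?thesis unfolding x_def by simp
  qed
  have row: "(\<Sum>k<n. (cmod (?E j k))\<^sup>2) \<le> C\<^sup>2 * real (2 * M0 + 1)" if j: "j < n" for j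
  proof -
    have "(\<Sum>k<n. (cmod (?E j k))\<^sup>2) \<le> (\<Sum>k<n. if (int j - int k) mod int n \<in> wrapped_band n M0 then C\<^sup>2 else 0)"
      using j ent by (intro sum_mono) auto
    also have "\<dots> = C\<^sup>2 * real (card {k. k < n \<and> (int j - int k) mod int n \<in> wrapped_band n M0})"
      by (simp add: sum.If_cases lessThan_def Collect_conj_eq Int_commute)
    also have "\<dots> \<le> C\<^sup>2 * real (2 * M0 + 1)"
      using card_row_wrapped_band[OF n, of j M0] by (intro mult_left_mono) auto
    finally show ?thesis .
  qed
  have "(\<Sum>j<n. \<Sum>k<n. (cmod (?E j k))\<^sup>2) \<le> (\<Sum>j<n. C\<^sup>2 * real (2 * M0 + 1))"
    using row by (intro sum_mono) auto
  also have "\<dots> = real n * (real (2 * M0 + 1) * C\<^sup>2)" by simp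
  finally have "sqrt (\<Sum>j<n. \<Sum>k<n. (cmod (?E j k))\<^sup>2) \<le> sqrt (real n * (real (2 * M0 + 1) * C\<^sup>2))"
    by (rule real_sqrt_le_mono)
  thus ?thesis using op_norm_le_frobenius[of n ?E] unfolding C_def by (rule op_norm_le_mono[rotated])
qed

lemma opt_circulant_close_to_wrap_circulant:
  assumes band: "\<And>m. \<bar>m\<bar> > int M0 \<Longrightarrow> fourier_coeff p m = 0"
    and bound: "\<And>m. cmod (fourier_coeff p m) \<le> Bx" and \<delta>: "0 < \<delta>"
  obtains N where "\<And>n. N < n \<Longrightarrow>
    op_norm_le n (\<lambda>i j. mat_fun (opt_circulant n p) i j - wrap_circulant n (fourier_coeff p) i j) \<delta>"
proof -
  define Q where "Q = real (2 * M0 + 1) * (2 * real M0 * Bx)\<^sup>2"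
  have "op_norm_le n (\<lambda>i j. mat_fun (opt_circulant n p) i j - wrap_circulant n (fourier_coeff p) i j) \<delta>"
    if nN: "nat \<lceil>Q / \<delta>\<^sup>2\<rceil> < n" for n
  proof -
    have n: "0 < n" using nN by simp
    have "Q / \<delta>\<^sup>2 \<le> real (nat \<lceil>Q / \<delta>\<^sup>2\<rceil>)" by linarith
    also have "\<dots> < real n" using nN by simp
    finally have "Q < \<delta>\<^sup>2 * real n" using \<delta> by (simp add: field_simps)
    hence "Q / real n \<le> \<delta>\<^sup>2" using n by (simp add: field_simps)
    moreover have "real n * (real (2 * M0 + 1) * (2 * real M0 * Bx / real n)\<^sup>2) = Q / real n"
      using n by (simp add: Q_def power2_eq_square field_simps)
    ultimately have "real n * (real (2 * M0 + 1) * (2 * real M0 * Bx / real n)\<^sup>2) \<le> \<delta>\<^sup>2" by simp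
    hence small: "sqrt (real n * (real (2 * M0 + 1) * (2 * real M0 * Bx / real n)\<^sup>2)) \<le> \<delta>"
      using \<delta> by (simp add: real_sqrt_le_iff real_le_lsqrt)
    show ?thesis
    proof (rule op_norm_le_cong[OF _ op_norm_le_mono[OF op_norm_le_opt_minus_wrap[OF band bound n] small]])
      fix i j assume i: "i < n" and j: "j < n"
      define x where "x = (int i - int j) mod int n"
      have x0: "0 \<le> x" using n by (simp add: x_def)
      show "(let x = (int i - int j) mod int n in
            ((of_nat n - of_int x) * fourier_coeff p x + of_int x * fourier_coeff p (x - int n)) / of_nat n
            - (fourier_coeff p x + fourier_coeff p (x - int n))) =
          mat_fun (opt_circulant n p) i j - wrap_circulant n (fourier_coeff p) i j"
        unfolding x_def[symmetric] Let_def using i j x0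
        by (simp add: mat_fun_def opt_circulant_def opt_circ_coeff_def wrap_circulant_def x_def[symmetric])
    qed
  qed
  then show thesis by (rule that)
qed

lemma exp_wrap_circulant_split:
  assumes C: "C \<in> carrier_mat n n" and A: "A \<in> carrier_mat n n"
    and band: "\<And>m. \<bar>m\<bar> > int M0 \<Longrightarrow> b m = 0"
    and rC: "op_norm_le n (mat_fun C) r" and rA: "op_norm_le n (mat_fun A) r"
    and rD: "op_norm_le n (wrap_circulant n b) r" and rT: "op_norm_le n (toeplitz_fun b) r"
    and r: "0 \<le> r"
    and CD: "op_norm_le n (\<lambda>i j. mat_fun C i j - wrap_circulant n b i j) a"
    and AT: "op_norm_le n (\<lambda>i j. mat_fun A i j - toeplitz_fun b i j) a'"
    and a: "0 \<le> a" and a': "0 \<le> a'"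
  obtains R E where "R \<in> carrier_mat n n" "E \<in> carrier_mat n n" "mat_exp C - mat_exp A = R + E"
    "vec_space.rank n R \<le> 2 * (K * M0)"
    "spec_norm E \<le> exp r * a + exp r * a' + 2 * (exp r - (\<Sum>m<K. r ^ m / fact m))"
proof
  define R where "R = mat n n (\<lambda>(i, j). exp_partial_sum n (wrap_circulant n b) K i j
                                         - exp_partial_sum n (toeplitz_fun b) K i j)"
  show R: "R \<in> carrier_mat n n" by (simp add: R_def)
  show "mat_exp C - mat_exp A - R \<in> carrier_mat n n" by (rule minus_carrier_mat[OF R])
  show "mat_exp C - mat_exp A = R + (mat_exp C - mat_exp A - R)"
    using A C R by (intro eq_matI) (auto simp: mat_exp_def)
  show "vec_space.rank n R \<le> 2 * (K * M0)"
    unfolding R_def by (rule rank_exp_partial_sum_wrap_circulant_minus_toeplitz[OF band])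
  show "spec_norm (mat_exp C - mat_exp A - R)
      \<le> exp r * a + exp r * a' + 2 * (exp r - (\<Sum>m<K. r ^ m / fact m))"
    unfolding R_def by (rule spec_norm_mat_exp_diff_minus_partial_sums[OF C A rC rA rD rT r CD AT a a'])
qed

lemma exp_opt_circulant_minus_exp_toeplitz_split:
  fixes f p :: "real \<Rightarrow> complex"
  assumes f: "continuous_on {-pi..pi} f" and G: "\<forall>t\<in>{-pi..pi}. cmod (f t) \<le> G"
    and p: "continuous_on {-pi..pi} p" and fp: "\<forall>t\<in>{-pi..pi}. cmod (f t - p t) \<le> \<delta>"
    and r: "G + 2 * \<delta> \<le> r" and band: "\<And>m. \<bar>m\<bar> > int M0 \<Longrightarrow> fourier_coeff p m = 0"
    and n: "0 < n"
    and wrap: "op_norm_le n (\<lambda>i j. mat_fun (opt_circulant n p) i j - wrap_circulant n (fourier_coeff p) i j) \<delta>"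
  obtains R E where "R \<in> carrier_mat n n" "E \<in> carrier_mat n n"
    "mat_exp (opt_circulant n f) - mat_exp (toeplitz_mat n f) = R + E"
    "vec_space.rank n R \<le> 2 * (K * M0)"
    "spec_norm E \<le> 3 * exp r * \<delta> + 2 * (exp r - (\<Sum>m<K. r ^ m / fact m))"
proof -
  define T D where "T = toeplitz_fun (fourier_coeff p)" and "D = wrap_circulant n (fourier_coeff p)"
  have G0: "0 \<le> G" and \<delta>0: "0 \<le> \<delta>"
    using G fp norm_ge_zero[of "f 0"] norm_ge_zero[of "f 0 - p 0"]
    by (meson atLeastAtMost_iff order_trans pi_ge_zero neg_le_0_iff_le)+
  have pG: "\<forall>t\<in>{-pi..pi}. cmod (p t) \<le> G + \<delta>"
  proof
    fix t assume t: "t \<in> {-pi..pi}"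
    have "cmod (p t) \<le> cmod (f t) + cmod (f t - p t)"
      using norm_triangle_sub[of "p t" "f t"] by (simp add: norm_minus_commute)
    thus "cmod (p t) \<le> G + \<delta>" using G fp t by fastforce
  qed
  have "op_norm_le n (mat_fun (toeplitz_mat n f)) G"
    by (rule op_norm_le_cong[OF _ op_norm_le_toeplitz[OF f G]]) (simp add: mat_fun_toeplitz_mat)
  hence rA: "op_norm_le n (mat_fun (toeplitz_mat n f)) r" by (rule op_norm_le_mono) (use r \<delta>0 in linarith)
  have "op_norm_le n (mat_fun (opt_circulant n f)) G" by (rule op_norm_le_opt_circulant[OF n op_norm_le_toeplitz[OF f G]])
  hence rC: "op_norm_le n (mat_fun (opt_circulant n f)) r" by (rule op_norm_le_mono) (use r \<delta>0 in linarith)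
  have "op_norm_le n T (G + \<delta>)" unfolding T_def by (rule op_norm_le_toeplitz[OF p pG])
  hence rT: "op_norm_le n T r" by (rule op_norm_le_mono) (use r \<delta>0 in linarith)
  have "op_norm_le n D (G + \<delta> + \<delta>)"
    by (rule op_norm_le_cong[OF _ op_norm_le_diff[OF op_norm_le_opt_circulant[OF n op_norm_le_toeplitz[OF p pG]] wrap]])
      (simp add: D_def)
  hence rD: "op_norm_le n D r" by (rule op_norm_le_mono) (use r in linarith)
  have AT: "op_norm_le n (\<lambda>i j. mat_fun (toeplitz_mat n f) i j - T i j) \<delta>"
    by (rule op_norm_le_cong[OF _ op_norm_le_toeplitz_diff[OF f p fp]]) (simp add: T_def mat_fun_toeplitz_mat)
  have CD: "op_norm_le n (\<lambda>i j. mat_fun (opt_circulant n f) i j - D i j) (\<delta> + \<delta>)"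
    by (rule op_norm_le_cong[OF _ op_norm_le_add[OF op_norm_le_opt_circulant_diff[OF n f p fp] wrap]])
      (simp add: D_def)
  have C: "opt_circulant n f \<in> carrier_mat n n" and A: "toeplitz_mat n f \<in> carrier_mat n n"
    by (simp_all add: toeplitz_mat_def opt_circulant_def)
  have r0: "0 \<le> r" using G0 \<delta>0 r by linarith
  obtain R E where "R \<in> carrier_mat n n" "E \<in> carrier_mat n n"
    "mat_exp (opt_circulant n f) - mat_exp (toeplitz_mat n f) = R + E" "vec_space.rank n R \<le> 2 * (K * M0)"
    "spec_norm E \<le> exp r * (\<delta> + \<delta>) + exp r * \<delta> + 2 * (exp r - (\<Sum>m<K. r ^ m / fact m))"
    by (rule exp_wrap_circulant_split[OF C A band rC rA rD[unfolded D_def] rT[unfolded T_def] r0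
          CD[unfolded D_def] AT[unfolded T_def]]) (use \<delta>0 in auto)
  then show thesis by (intro that) (simp_all add: algebra_simps)
qed

theorem mainTheorem2:
  fixes f :: "real \<Rightarrow> complex"
  assumes cont: "continuous_on UNIV f"
    and periodic: "\<And>x. f (x + 2 * pi) = f x"
  shows "\<forall>\<epsilon>::real. \<epsilon> > 0 \<longrightarrow>
    (\<exists>N M :: nat. N > 0 \<and> M > 0 \<and>
      (\<forall>n > N. \<exists>R E :: complex mat.
          R \<in> carrier_mat n n \<and> E \<in> carrier_mat n n \<and>
          mat_exp (opt_circulant n f) - mat_exp (toeplitz_mat n f) = R + E \<and>
          vec_space.rank n R \<le> 2 * M \<and>
          spec_norm E \<le> \<epsilon>))"
proof (intro allI impI)
  fix \<epsilon> :: real assume "\<epsilon> > 0"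
  have f: "continuous_on {-pi..pi} f" using cont by (rule continuous_on_subset) auto
  have ends: "f (-pi) = f pi" using periodic[of "-pi"] by simp
  obtain G where G: "\<forall>t\<in>{-pi..pi}. cmod (f t) \<le> G"
    using compact_imp_bounded[OF compact_continuous_image[OF f compact_Icc]] unfolding bounded_iff by auto
  obtain K \<delta> where \<delta>: "0 < \<delta>" "\<delta> \<le> 1"
    and budget: "3 * exp (G + 2) * \<delta> + 2 * (exp (G + 2) - (\<Sum>m<K. (G + 2) ^ m / fact m)) \<le> \<epsilon>"
    using exp_error_budget[OF \<open>\<epsilon> > 0\<close>] by blast
  obtain p M0 Bx where p: "continuous_on {-pi..pi} p" "\<forall>t\<in>{-pi..pi}. cmod (f t - p t) \<le> \<delta>"
    "\<And>m. \<bar>m\<bar> > int M0 \<Longrightarrow> fourier_coeff p m = 0" "\<And>m. cmod (fourier_coeff p m) \<le> Bx"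
    using band_limited_approx[OF f ends \<delta>(1)] by blast
  obtain N where N: "\<And>n. N < n \<Longrightarrow>
      op_norm_le n (\<lambda>i j. mat_fun (opt_circulant n p) i j - wrap_circulant n (fourier_coeff p) i j) \<delta>"
    using opt_circulant_close_to_wrap_circulant[OF p(3,4) \<delta>(1)] by blast
  have "\<exists>R E :: complex mat. R \<in> carrier_mat n n \<and> E \<in> carrier_mat n n \<and>
      mat_exp (opt_circulant n f) - mat_exp (toeplitz_mat n f) = R + E \<and>
      vec_space.rank n R \<le> 2 * (K * M0 + 1) \<and> spec_norm E \<le> \<epsilon>" if "N + 1 < n" for n
  proof -
    have n: "0 < n" "N < n" using that by simp_all
    obtain R E where "R \<in> carrier_mat n n" "E \<in> carrier_mat n n"
        "mat_exp (opt_circulant n f) - mat_exp (toeplitz_mat n f) = R + E"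
        "vec_space.rank n R \<le> 2 * (K * M0)"
        "spec_norm E \<le> 3 * exp (G + 2) * \<delta> + 2 * (exp (G + 2) - (\<Sum>m<K. (G + 2) ^ m / fact m))"
      by (rule exp_opt_circulant_minus_exp_toeplitz_split[where K = K and r = "G + 2",
            OF f G p(1,2) _ p(3) n(1) N[OF n(2)]]) (use \<delta>(2) in simp)
    with budget show ?thesis by (intro exI[of _ R] exI[of _ E]) auto
  qed
  then show "\<exists>N M :: nat. N > 0 \<and> M > 0 \<and> (\<forall>n > N. \<exists>R E :: complex mat.
      R \<in> carrier_mat n n \<and> E \<in> carrier_mat n n \<and>
      mat_exp (opt_circulant n f) - mat_exp (toeplitz_mat n f) = R + E \<and>
      vec_space.rank n R \<le> 2 * M \<and> spec_norm E \<le> \<epsilon>)"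
    by (intro exI[of _ "N + 1"] exI[of _ "K * M0 + 1"]) auto
qed

end
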